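(* Let $m\in\mathbb Z_{\ge0}$, let $\lambda/\mu$ be an r-shape and $\mathbf a,\mathbf b$ column flags for it. Then $$\mathsf g^{\mathbf a,\mathbf b}_{\lambda/\mu}(\mathbf x_m;\boldsymbol\alpha,\boldsymbol\beta)=\sum_{T\in GT_{\lambda/\mu}(\mathbf a,\mathbf b)}wt(T).$$ In particular, for a usual skew shape $\lambda/\mu$ with $a_i=-i+2$, $b_i=\lambda'_i+m-1$, $$g_{\lambda/\mu}(\mathbf x_m;\boldsymbol\alpha,\boldsymbol\beta)=\sum_{T\in GT_{\lambda/\mu}}wt(T).$$
   Context: Young diagrams in English notation; an r-shape $(\lambda/\mu,r)$ carries shifted contents $c(i,j)=j-i+r-1+\lambda'_1$; a usual skew shape has $c(i,j)=j-i$. Column flags: $\mathbf a,\mathbf b\in\mathbb Z^n$ ($n\ge\lambda_1$) with $a_i-a_{i+1}\le\mu'_i-\mu'_{i+1}+1$, $b_i-b_{i+1}\le\lambda'_i-\lambda'_{i+1}+1$ whenever $\mu'_i<\lambda'_{i+1}$; conjugates $a'_i=a_i+c(\gamma_i)$, $b'_i=b_i+c(\delta_i)$. $\mathbf w_{p,q}=(w_p,\ldots,w_q)$, $\mathbf w_k=\mathbf w_{1,k}$, $\overline{\mathbf w}=(-w_i)$, commas = union; $e_n(\mathbf x/\mathbf w)=\sum_{i=0}^n(-1)^{n-i}e_i(\mathbf x)h_{n-i}(\mathbf w)$; $\mathsf S^{\mathbf a,\mathbf b}_{\lambda/\mu}(\mathbf y/\mathbf z)=\det[e_{\lambda'_i-i-\mu'_j+j}(\mathbf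 y_{a_j,b_i}/\mathbf z_{a'_j,b'_i})]_{1\le i,j\le n}$. $g$-specialization: $y_i\mapsto x_i$ ($i\in[m]$), $\beta_{i-m}$ ($i>m$), $-\alpha_{-i+1}$ ($i\le0$); $z_i\mapsto0$ ($i\in[m]$), $-\alpha_{i-m}$ ($i>m$), $\beta_{-i+1}$ ($i\le0$). $\mathsf g^{\mathbf a,\mathbf b}_{\lambda/\mu}(\mathbf x_m;\boldsymbol\alpha,\boldsymbol\beta)=\mathsf S^{\mathbf a,\mathbf b}_{\lambda/\mu}(\mathbf y/\mathbf z)|_g$. $g_{\lambda/\mu}(\mathbf x_m;\boldsymbol\alpha,\boldsymbol\beta)=\det[e_{\lambda'_i-i-\mu'_j+j}(\mathbf x_m,\overline{\boldsymbol\alpha}_{j-1},\boldsymbol\beta_{\lambda'_i-1}/\overline{\boldsymbol\alpha}_{i-1},\boldsymbol\beta_{\mu'_j})]_{1\le i,j\le n}$. Super tableaux: a flagged $\mathbb Z$-SSYT is a filling $\tilde T$ by integers, weakly increasing along rows, strictly increasing down columns, with $a_j\le\tilde T_{ij}\le b_j$ in column $j$; a flagged super tableau is obtained by choosing per cell either $\tilde T_{ij}$ or the primed integer $(\tilde T_{ij}+c(i,j))'$; $ST_{\lambda/\mu}(\mathbf a,\mathbf b)$ is the set of these. $\mathsf g$-tableaux: for $\tilde T\in ST_{\lambda/\mu}(\mathbf a,\mathbf b)$ containing no primed entry from $\{1',\ldots,m'\}$, define $T$ cellwise: an unprimed entry $t\in[m]$ stays $t$; unprimed $t>m$ becomes $(t-m)^\circ$;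 unprimed $t\le0$ becomes $(t-1)^\bullet$; primed $t'$ with $t>m$ becomes $(t-m)^\bullet$; primed $t'$ with $t\le0$ becomes $(t-1)^\circ$. $GT_{\lambda/\mu}(\mathbf a,\mathbf b)$ is the set of all such $T$; for the usual shape with $a_i=-i+2$, $b_i=\lambda'_i+m-1$ it is denoted $GT_{\lambda/\mu}$. Weight: $wt(T)=\prod wt(T_{ij})$ with, for $r>0$: $wt(r)=x_r$, $wt(r^\bullet)=\alpha_r$, $wt((-r)^\bullet)=-\alpha_r$, $wt(r^\circ)=\beta_r$, $wt((-r)^\circ)=-\beta_r$. *)

theory Defs
  imports "Jordan_Normal_Form.Determinant"
begin

definition is_partition :: "nat list \<Rightarrow> bool" where
  "is_partition la \<longleftrightarrow> sorted_wrt (\<ge>) la \<and> 0 \<notin> set la"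

definition part :: "nat list \<Rightarrow> nat \<Rightarrow> nat" where
  "part la i = (if 1 \<le> i \<and> i \<le> length la then la ! (i - 1) else 0)"

text \<open>Conjugate partition: conj la j = la'_j = number of parts \<ge> j (for j \<ge> 1).\<close>
definition conj :: "nat list \<Rightarrow> nat \<Rightarrow> nat" where
  "conj la j = length (filter (\<lambda>p. j \<le> p) la)"

definition subpart :: "nat list \<Rightarrow> nat list \<Rightarrow> bool" where
  "subpart mu la \<longleftrightarrow> (\<forall>i. part mu i \<le> part la i)"

text \<open>Cells (i,j) (row i, column j, English notation) of the skew diagram la/mu.\<close>
definition skew_cells :: "nat list \<Rightarrow> nat list \<Rightarrow> (nat \<times> nat) set" where
  "skew_cells la mu = {(i, j). 1 \<le> i \<and> 1 \<le> j \<and> part mu i < j \<and> j \<le> part la i}"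

definition rcont :: "int \<Rightarrow> nat list \<Rightarrow> nat \<Rightarrow> nat \<Rightarrow> int" where
  "rcont r la i j = int j - int i + r - 1 + int (conj la 1)"

definition ucont :: "nat \<Rightarrow> nat \<Rightarrow> int" where
  "ucont i j = int j - int i"

definition column_flags :: "nat list \<Rightarrow> nat list \<Rightarrow> nat \<Rightarrow> (nat \<Rightarrow> int) \<Rightarrow> (nat \<Rightarrow> int) \<Rightarrow> bool" where
  "column_flags la mu n a b \<longleftrightarrow>
     (\<forall>i. 1 \<le> i \<and> i < n \<and> conj mu i < conj la (i + 1) \<longrightarrow>
        a i - a (i + 1) \<le> int (conj mu i) - int (conj mu (i + 1)) + 1 \<and>
        b i - b (i + 1) \<le> int (conj la i) - int (conj la (i + 1)) + 1)"

definition esym :: "'a::comm_ring_1 list \<Rightarrow> nat \<Rightarrow> 'a" where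
  "esym L k = (\<Sum>S\<in>{S. S \<subseteq> {..<length L} \<and> card S = k}. \<Prod>i\<in>S. L ! i)"

definition hsym :: "'a::comm_ring_1 list \<Rightarrow> nat \<Rightarrow> 'a" where
  "hsym L k = (\<Sum>f\<in>{f. (\<forall>i. length L \<le> i \<longrightarrow> f i = 0) \<and> (\<Sum>i<length L. f i) = k}.
                  \<Prod>i<length L. (L ! i) ^ f i)"

definition esup :: "int \<Rightarrow> 'a::comm_ring_1 list \<Rightarrow> 'a list \<Rightarrow> 'a" where
  "esup k X W = (if k < 0 then 0 else
     (\<Sum>i\<in>{0..nat k}. (-1) ^ (nat k - i) * esym X i * hsym W (nat k - i)))"

definition alph :: "(int \<Rightarrow> 'a) \<Rightarrow> int \<Rightarrow> int \<Rightarrow> 'a list" where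
  "alph y p q = map y [p..q]"

text \<open>cf is the content function of the shape; gamma_j = (mu'_j + 1, j) is the top cell and
  delta_i = (la'_i, i) the bottom cell of column j resp. i, so
  a'_j = a_j + c(gamma_j), b'_i = b_i + c(delta_i).\<close>
definition Sdet :: "(nat \<Rightarrow> nat \<Rightarrow> int) \<Rightarrow> nat list \<Rightarrow> nat list \<Rightarrow> nat \<Rightarrow>
    (nat \<Rightarrow> int) \<Rightarrow> (nat \<Rightarrow> int) \<Rightarrow> (int \<Rightarrow> 'a::comm_ring_1) \<Rightarrow> (int \<Rightarrow> 'a) \<Rightarrow> 'a" where
  "Sdet cf la mu n a b y z =
     det (mat n n (\<lambda>(i0, j0).
       let i = i0 + 1; j = j0 + 1;
           a' = a j + cf (conj mu j + 1) j;
           b' = b i + cf (conj la i) i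
       in esup (int (conj la i) - int i - int (conj mu j) + int j)
               (alph y (a j) (b i)) (alph z a' b')))"

definition gy :: "nat \<Rightarrow> (nat \<Rightarrow> 'a::comm_ring_1) \<Rightarrow> (nat \<Rightarrow> 'a) \<Rightarrow> (nat \<Rightarrow> 'a) \<Rightarrow> int \<Rightarrow> 'a" where
  "gy m x \<alpha> \<beta> k = (if 1 \<le> k \<and> k \<le> int m then x (nat k)
                    else if k > int m then \<beta> (nat (k - int m))
                    else - \<alpha> (nat (- k + 1)))"

definition gz :: "nat \<Rightarrow> (nat \<Rightarrow> 'a::comm_ring_1) \<Rightarrow> (nat \<Rightarrow> 'a) \<Rightarrow> int \<Rightarrow> 'a" where
  "gz m \<alpha> \<beta> k = (if 1 \<le> k \<and> k \<le> int m then 0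
                  else if k > int m then - \<alpha> (nat (k - int m))
                  else \<beta> (nat (- k + 1)))"

definition gflag :: "(nat \<Rightarrow> nat \<Rightarrow> int) \<Rightarrow> nat list \<Rightarrow> nat list \<Rightarrow> nat \<Rightarrow>
    (nat \<Rightarrow> int) \<Rightarrow> (nat \<Rightarrow> int) \<Rightarrow> nat \<Rightarrow>
    (nat \<Rightarrow> 'a::comm_ring_1) \<Rightarrow> (nat \<Rightarrow> 'a) \<Rightarrow> (nat \<Rightarrow> 'a) \<Rightarrow> 'a" where
  "gflag cf la mu n a b m x \<alpha> \<beta> = Sdet cf la mu n a b (gy m x \<alpha> \<beta>) (gz m \<alpha> \<beta>)"

definition gusual :: "nat list \<Rightarrow> nat list \<Rightarrow> nat \<Rightarrow> nat \<Rightarrow>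
    (nat \<Rightarrow> 'a::comm_ring_1) \<Rightarrow> (nat \<Rightarrow> 'a) \<Rightarrow> (nat \<Rightarrow> 'a) \<Rightarrow> 'a" where
  "gusual la mu n m x \<alpha> \<beta> =
     det (mat n n (\<lambda>(i0, j0).
       let i = i0 + 1; j = j0 + 1
       in esup (int (conj la i) - int i - int (conj mu j) + int j)
            (map x [1..<m + 1] @ map (\<lambda>k. - \<alpha> k) [1..<j] @ map \<beta> [1..<conj la i])
            (map (\<lambda>k. - \<alpha> k) [1..<i] @ map \<beta> [1..<conj mu j + 1])))"

definition flagged_ssyt :: "(nat \<times> nat) set \<Rightarrow> (nat \<Rightarrow> int) \<Rightarrow> (nat \<Rightarrow> int) \<Rightarrow>
    (nat \<times> nat \<Rightarrow> int) \<Rightarrow> bool" where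
  "flagged_ssyt C a b T \<longleftrightarrow>
     (\<forall>i j. (i, j) \<in> C \<longrightarrow> a j \<le> T (i, j) \<and> T (i, j) \<le> b j) \<and>
     (\<forall>i j. (i, j) \<in> C \<and> (i, j + 1) \<in> C \<longrightarrow> T (i, j) \<le> T (i, j + 1)) \<and>
     (\<forall>i j. (i, j) \<in> C \<and> (i + 1, j) \<in> C \<longrightarrow> T (i, j) < T (i + 1, j))"

datatype sentry = Unp int | Pr int

text \<open>Flagged super tableaux; cells outside C carry the dummy value Unp 0.\<close>
definition super_tabs :: "(nat \<times> nat) set \<Rightarrow> (nat \<Rightarrow> nat \<Rightarrow> int) \<Rightarrow>
    (nat \<Rightarrow> int) \<Rightarrow> (nat \<Rightarrow> int) \<Rightarrow> (nat \<times> nat \<Rightarrow> sentry) set" where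
  "super_tabs C cf a b = {S. \<exists>T P. flagged_ssyt C a b T \<and> P \<subseteq> C \<and>
      S = (\<lambda>(i, j). if (i, j) \<in> C then
                       (if (i, j) \<in> P then Pr (T (i, j) + cf i j) else Unp (T (i, j)))
                     else Unp 0)}"

datatype gentry = Plain int | Bul int | Circ int

definition to_g :: "nat \<Rightarrow> (nat \<times> nat) set \<Rightarrow> (nat \<times> nat \<Rightarrow> sentry) \<Rightarrow> (nat \<times> nat \<Rightarrow> gentry)" where
  "to_g m C S = (\<lambda>c. if c \<in> C then
      (case S c of
         Unp t \<Rightarrow> (if 1 \<le> t \<and> t \<le> int m then Plain t
                   else if t > int m then Circ (t - int m) else Bul (t - 1))
       | Pr t \<Rightarrow> (if t > int m then Bul (t - int m) else Circ (t - 1)))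
    else Plain 0)"

definition g_tabs :: "nat \<Rightarrow> (nat \<times> nat) set \<Rightarrow> (nat \<Rightarrow> nat \<Rightarrow> int) \<Rightarrow>
    (nat \<Rightarrow> int) \<Rightarrow> (nat \<Rightarrow> int) \<Rightarrow> (nat \<times> nat \<Rightarrow> gentry) set" where
  "g_tabs m C cf a b = to_g m C `
     {S \<in> super_tabs C cf a b. \<forall>c t. S c = Pr t \<longrightarrow> \<not> (1 \<le> t \<and> t \<le> int m)}"

definition gwt :: "(nat \<Rightarrow> 'a::comm_ring_1) \<Rightarrow> (nat \<Rightarrow> 'a) \<Rightarrow> (nat \<Rightarrow> 'a) \<Rightarrow> gentry \<Rightarrow> 'a" where
  "gwt x \<alpha> \<beta> e = (case e of
      Plain r \<Rightarrow> x (nat r)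
    | Bul r \<Rightarrow> (if r > 0 then \<alpha> (nat r) else - \<alpha> (nat (- r)))
    | Circ r \<Rightarrow> (if r > 0 then \<beta> (nat r) else - \<beta> (nat (- r))))"

definition tab_wt :: "(nat \<times> nat) set \<Rightarrow> (nat \<Rightarrow> 'a::comm_ring_1) \<Rightarrow> (nat \<Rightarrow> 'a) \<Rightarrow> (nat \<Rightarrow> 'a) \<Rightarrow>
    (nat \<times> nat \<Rightarrow> gentry) \<Rightarrow> 'a" where
  "tab_wt C x \<alpha> \<beta> T = (\<Prod>c\<in>C. gwt x \<alpha> \<beta> (T c))"

definition GT_usual :: "nat \<Rightarrow> nat list \<Rightarrow> nat list \<Rightarrow> (nat \<times> nat \<Rightarrow> gentry) set" where
  "GT_usual m la mu = g_tabs m (skew_cells la mu) ucont (\<lambda>i. 2 - int i)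
                        (\<lambda>i. int (conj la i) + int m - 1)"

end

theory Submission
  imports Defs "HOL-Library.Disjoint_Sets"
begin

text \<open>Each entry \<open>e_k(y[a_j, b_i] / z[a'_j, b'_i])\<close> of the flagged determinant is a sum over the
  \<open>k\<close>-subsets of \<open>[a_j, b_i]\<close>, i.e. over strictly increasing fillings of a column, an entry \<open>s\<close> in
  a cell of content \<open>c\<close> contributing \<open>y_s - z_(s+c)\<close>. Expanding the determinant gives signed
  families of such columns, viewed as lattice paths, and the Lindstrom--Gessel--Viennot
  involution (exchange the tails of two paths at their first meeting point) cancels every family
  in which two paths meet. The flag conditions force the surviving families to carry the identity
  permutation, and consecutive columns that never meet are exactly columns whose rows weakly
  increase, so the determinant is a sum over flagged tableaux \<open>T\<close> of \<open>\<Prod>(y_T - z_(T+c))\<close>.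
  Expanding this product chooses an unprimed or a primed entry in every cell, which gives the super
  tableaux; under the \<open>g\<close>-specialization primed entries from \<open>[m]\<close> weigh \<open>0\<close>, and the remaining
  ones are the \<open>g\<close>-tableaux with their weights. The usual \<open>g_(\<lambda>/\<mu>)\<close> is the case
  \<open>r = 1 - \<lambda>'_1\<close>: its entries agree with the flagged ones up to reordering the alphabets and
  dropping zeros, and its rows beyond \<open>\<lambda>_1\<close> are unitriangular.\<close>

section \<open>Elementary, complete and supersymmetric functions of alphabets\<close>

lemma esym_0 [simp]: "esym L 0 = 1"
proof -
  have "{S. S \<subseteq> {..<length L} \<and> card S = 0} = {{}}"
    by (auto dest: finite_subset)
  then show ?thesis by (simp add: esym_def)
qed

lemma esym_eq_0_if_length_less: "length L < k \<Longrightarrow> esym L k = 0"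
proof -
  assume "length L < k"
  moreover have "card S \<le> length L" if "S \<subseteq> {..<length L}" for S
    using card_mono[OF finite_lessThan that] by simp
  ultimately have "{S. S \<subseteq> {..<length L} \<and> card S = k} = {}"
    by (metis (mono_tags, lifting) empty_Collect_eq leD)
  then show ?thesis unfolding esym_def by (simp only: sum.empty)
qed

lemma subsets_lessThan_Suc_card_Suc:
  "{S. S \<subseteq> {..<Suc n} \<and> card S = Suc k}
     = {S. S \<subseteq> {..<n} \<and> card S = Suc k} \<union> insert n ` {S. S \<subseteq> {..<n} \<and> card S = k}"
proof (intro equalityI subsetI)
  fix S assume "S \<in> {S. S \<subseteq> {..<Suc n} \<and> card S = Suc k}"
  then have S: "S \<subseteq> {..<Suc n}" "card S = Suc k" by auto
  show "S \<in> {S. S \<subseteq> {..<n} \<and> card S = Suc k} \<union> insert n ` {S. S \<subseteq> {..<n} \<and> card S = k}"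
  proof (cases "n \<in> S")
    case True
    then have "S = insert n (S - {n})" "S - {n} \<in> {S. S \<subseteq> {..<n} \<and> card S = k}"
      using S by (auto simp: card_Diff_singleton_if dest: finite_subset)
    then show ?thesis by blast
  next
    case False
    then show ?thesis using S by (auto simp: less_Suc_eq)
  qed
next
  fix S assume "S \<in> {S. S \<subseteq> {..<n} \<and> card S = Suc k} \<union> insert n ` {S. S \<subseteq> {..<n} \<and> card S = k}"
  then consider "S \<subseteq> {..<n}" "card S = Suc k" | T where "T \<subseteq> {..<n}" "card T = k" "S = insert n T"
    by auto
  then show "S \<in> {S. S \<subseteq> {..<Suc n} \<and> card S = Suc k}"
  proof cases
    case 1
    then show ?thesis by auto
  next
    case 2
    then have "finite T" "n \<notin> T" by (auto dest: finite_subset)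
    then have "card S = Suc k" using 2 by simp
    moreover have "S \<subseteq> {..<Suc n}" using 2 by (auto simp: subset_eq)
    ultimately show ?thesis by simp
  qed
qed

lemma esym_snoc: "esym (L @ [v]) (Suc k) = esym L (Suc k) + v * esym L k"
proof -
  define n where "n = length L"
  define A1 where "A1 = {S. S \<subseteq> {..<n} \<and> card S = Suc k}"
  define A0 where "A0 = {S. S \<subseteq> {..<n} \<and> card S = k}"
  have fin: "finite A1" "finite A0"
    unfolding A1_def A0_def by (rule finite_subset[of _ "Pow {..<n}"], auto)+
  have disj: "A1 \<inter> insert n ` A0 = {}" unfolding A1_def A0_def by auto
  have inj: "inj_on (insert n) A0"
  proof (rule inj_onI)
    fix S T assume "S \<in> A0" "T \<in> A0" "insert n S = insert n T"
    moreover from calculation(1,2) have "n \<notin> S" "n \<notin> T" by (auto simp: A0_def)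
    ultimately show "S = T" by (metis Diff_insert_absorb)
  qed
  have old: "(\<Prod>i\<in>S. (L @ [v]) ! i) = (\<Prod>i\<in>S. L ! i)" if "S \<subseteq> {..<n}" for S
    using that unfolding n_def by (intro prod.cong) (auto simp: nth_append)
  have new: "(\<Prod>i\<in>insert n S. (L @ [v]) ! i) = v * (\<Prod>i\<in>S. L ! i)" if "S \<in> A0" for S
  proof -
    have "finite S" "n \<notin> S" "S \<subseteq> {..<n}" using that unfolding A0_def by (auto dest: finite_subset)
    then show ?thesis using old[of S] by (simp add: n_def)
  qed
  have "esym (L @ [v]) (Suc k)
      = (\<Sum>S\<in>A1. \<Prod>i\<in>S. (L @ [v]) ! i) + (\<Sum>S\<in>insert n ` A0. \<Prod>i\<in>S. (L @ [v]) ! i)"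
    unfolding esym_def length_append_singleton n_def[symmetric] subsets_lessThan_Suc_card_Suc
      A1_def[symmetric] A0_def[symmetric]
    using fin disj by (simp add: sum.union_disjoint)
  also have "(\<Sum>S\<in>A1. \<Prod>i\<in>S. (L @ [v]) ! i) = esym L (Suc k)"
    unfolding esym_def A1_def n_def by (intro sum.cong) (auto simp: old n_def)
  also have "(\<Sum>S\<in>insert n ` A0. \<Prod>i\<in>S. (L @ [v]) ! i) = (\<Sum>S\<in>A0. v * (\<Prod>i\<in>S. L ! i))"
    by (simp add: sum.reindex[OF inj] new)
  also have "\<dots> = v * esym L k"
    unfolding esym_def A0_def n_def by (simp add: sum_distrib_left)
  finally show ?thesis .
qed

definition weak_compositions :: "nat \<Rightarrow> nat \<Rightarrow> (nat \<Rightarrow> nat) set" where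
  "weak_compositions n k = {f. (\<forall>i. n \<le> i \<longrightarrow> f i = 0) \<and> (\<Sum>i<n. f i) = k}"

lemma hsym_weak_compositions:
  "hsym L k = (\<Sum>f\<in>weak_compositions (length L) k. \<Prod>i<length L. (L ! i) ^ f i)"
  unfolding hsym_def weak_compositions_def by simp

lemma finite_weak_compositions: "finite (weak_compositions n k)"
proof -
  have "weak_compositions n k \<subseteq> (\<lambda>g i. if i < n then g i else 0) ` PiE {..<n} (\<lambda>_. {..k})"
  proof
    fix f assume f: "f \<in> weak_compositions n k"
    then have "f = (\<lambda>i. if i < n then restrict f {..<n} i else 0)"
      by (auto simp: weak_compositions_def fun_eq_iff)
    moreover have "f i \<le> k" if "i < n" for i
      using f that member_le_sum[of i "{..<n}" f] by (simp add: weak_compositions_def)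
    then have "restrict f {..<n} \<in> PiE {..<n} (\<lambda>_. {..k})" by auto
    ultimately show "f \<in> (\<lambda>g i. if i < n then g i else 0) ` PiE {..<n} (\<lambda>_. {..k})" by blast
  qed
  then show ?thesis by (rule finite_subset) (auto intro: finite_PiE)
qed

lemma hsym_0 [simp]: "hsym L 0 = 1"
proof -
  have "weak_compositions (length L) 0 = {\<lambda>_. 0}"
    unfolding weak_compositions_def by (auto simp: fun_eq_iff) (metis lessThan_iff not_le)
  then show ?thesis by (simp add: hsym_weak_compositions)
qed

lemma hsym_Nil_Suc [simp]: "hsym [] (Suc k) = 0"
proof -
  have "weak_compositions 0 (Suc k) = {}" unfolding weak_compositions_def by auto
  then show ?thesis by (simp add: hsym_weak_compositions)
qed

lemma hsym_snoc: "hsym (L @ [v]) (Suc k) = hsym L (Suc k) + v * hsym (L @ [v]) k"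
proof -
  define n where "n = length L"
  define P where "P = (\<lambda>f. \<Prod>i<Suc n. ((L @ [v]) ! i) ^ f i)"
  define B1 where "B1 = {f \<in> weak_compositions (Suc n) (Suc k). f n = 0}"
  define B2 where "B2 = {f \<in> weak_compositions (Suc n) (Suc k). f n \<noteq> 0}"
  have B1: "B1 = weak_compositions n (Suc k)"
    unfolding B1_def weak_compositions_def
    by (auto simp: le_Suc_eq) (metis Suc_leI le_neq_implies_less)
  have fin: "finite B1" "finite B2" unfolding B1_def B2_def using finite_weak_compositions by auto
  have "hsym (L @ [v]) (Suc k) = sum P B1 + sum P B2"
    unfolding hsym_weak_compositions P_def n_def B1_def B2_def
    by (subst sum.union_disjoint[symmetric])
      (auto intro: sum.cong finite_subset[OF _ finite_weak_compositions])
  also have "sum P B1 = hsym L (Suc k)"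
    unfolding B1 hsym_weak_compositions P_def n_def
    by (intro sum.cong refl) (auto simp: weak_compositions_def nth_append)
  also have "sum P B2 = v * hsym (L @ [v]) k"
  proof -
    define inc where "inc = (\<lambda>f::nat\<Rightarrow>nat. f(n := Suc (f n)))"
    have bij: "bij_betw inc (weak_compositions (Suc n) k) B2"
    proof (rule bij_betw_byWitness[where f' = "\<lambda>f. f(n := f n - 1)"])
      show "inc ` weak_compositions (Suc n) k \<subseteq> B2"
        by (auto simp: inc_def B2_def weak_compositions_def)
      show "(\<lambda>f. f(n := f n - 1)) ` B2 \<subseteq> weak_compositions (Suc n) k"
        by (auto simp: B2_def weak_compositions_def)
    qed (auto simp: inc_def B2_def fun_eq_iff)
    have "sum P B2 = (\<Sum>f\<in>weak_compositions (Suc n) k. P (inc f))"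
      using bij by (simp add: sum.reindex_bij_betw)
    also have "\<dots> = (\<Sum>f\<in>weak_compositions (Suc n) k. v * P f)"
      by (intro sum.cong refl) (simp add: P_def inc_def nth_append n_def)
    finally show ?thesis by (simp add: hsym_weak_compositions sum_distrib_left P_def n_def)
  qed
  finally show ?thesis .
qed

lemma hsym_snoc_zero: "hsym (W @ [0]) k = hsym W k"
  by (cases k) (simp_all add: hsym_snoc)

lemma esym_cong_mset:
  assumes "mset xs = mset ys"
  shows "esym xs k = esym ys k"
proof -
  obtain p where p: "p permutes {..<length ys}" "permute_list p ys = xs"
    using mset_eq_permutation[OF assms] by blast
  define n where "n = length ys"
  have len: "length xs = n" using p(2) by (metis length_permute_list n_def)
  have nth: "xs ! i = ys ! p i" if "i < n" for i using p that permute_list_nth n_def by metis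
  define E where "E = {S. S \<subseteq> {..<n} \<and> card S = k}"
  have inj: "inj p" using p(1) by (rule permutes_inj)
  have "esym xs k = (\<Sum>S\<in>E. \<Prod>i\<in>S. ys ! p i)"
    unfolding esym_def len E_def[symmetric] by (intro sum.cong refl prod.cong) (auto simp: E_def nth)
  also have "\<dots> = (\<Sum>S\<in>E. \<Prod>i\<in>p ` S. ys ! i)"
    by (intro sum.cong refl) (simp add: prod.reindex[OF inj_on_subset[OF inj]])
  also have "\<dots> = (\<Sum>S\<in>E. \<Prod>i\<in>S. ys ! i)"
  proof (rule sum.reindex_bij_witness[where j = "\<lambda>S. p ` S" and i = "\<lambda>S. inv_into UNIV p ` S"])
    fix S assume S: "S \<in> E"
    show "inv_into UNIV p ` p ` S = S" using permutes_inverses(2)[OF p(1)] by (simp add: image_image)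
    have "p ` S \<subseteq> {..<n}" using S p(1) by (auto simp: E_def n_def dest: permutes_in_image)
    moreover have "card (p ` S) = k" using S inj by (simp add: E_def card_image inj_on_subset)
    ultimately show "p ` S \<in> E" by (simp add: E_def)
  next
    fix S assume S: "S \<in> E"
    show "p ` inv_into UNIV p ` S = S" using permutes_inverses(1)[OF p(1)] by (simp add: image_image)
    have ip: "inv_into UNIV p permutes {..<n}" using permutes_inv[OF p(1)] by (simp add: n_def)
    have "inv_into UNIV p ` S \<subseteq> {..<n}" using S ip by (auto simp: E_def dest: permutes_in_image)
    moreover have "card (inv_into UNIV p ` S) = k" using S permutes_inj[OF ip]
      by (simp add: E_def card_image inj_on_subset)
    ultimately show "inv_into UNIV p ` S \<in> E" by (simp add: E_def)
  qed simp
  also have "\<dots> = esym ys k" unfolding esym_def E_def n_def ..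
  finally show ?thesis .
qed

lemma hsym_cong_mset:
  assumes "mset xs = mset ys"
  shows "hsym xs k = hsym ys k"
proof -
  obtain p where p: "p permutes {..<length ys}" "permute_list p ys = xs"
    using mset_eq_permutation[OF assms] by blast
  define n where "n = length ys"
  have len: "length xs = n" using p(2) by (metis length_permute_list n_def)
  have nth: "xs ! i = ys ! p i" if "i < n" for i using p that permute_list_nth n_def by metis
  have pn: "p permutes {..<n}" using p(1) by (simp add: n_def)
  have ip: "inv_into UNIV p permutes {..<n}" using permutes_inv[OF pn] .
  have "hsym xs k = (\<Sum>f\<in>weak_compositions n k. \<Prod>i<n. (ys ! p i) ^ f i)"
    unfolding hsym_weak_compositions len by (intro sum.cong refl prod.cong) (auto simp: nth)
  also have "\<dots> = (\<Sum>f\<in>weak_compositions n k. \<Prod>j<n. (ys ! j) ^ f (inv_into UNIV p j))"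
  proof (intro sum.cong refl)
    fix f
    have "(\<Prod>j<n. (ys ! j) ^ f (inv_into UNIV p j)) = (\<Prod>i<n. (ys ! p i) ^ f (inv_into UNIV p (p i)))"
      using prod.permute[OF pn, of "\<lambda>j. (ys ! j) ^ f (inv_into UNIV p j)"] by (simp add: comp_def)
    then show "(\<Prod>i<n. (ys ! p i) ^ f i) = (\<Prod>j<n. (ys ! j) ^ f (inv_into UNIV p j))"
      using permutes_inverses(2)[OF pn] by simp
  qed
  also have "\<dots> = (\<Sum>g\<in>weak_compositions n k. \<Prod>j<n. (ys ! j) ^ g j)"
  proof (rule sum.reindex_bij_witness[where j = "\<lambda>f. f \<circ> inv_into UNIV p" and i = "\<lambda>g. g \<circ> p"])
    fix f assume f: "f \<in> weak_compositions n k"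
    show "f \<circ> inv_into UNIV p \<circ> p = f" using permutes_inverses(2)[OF pn] by (auto simp: fun_eq_iff)
    have "(f \<circ> inv_into UNIV p) j = 0" if "n \<le> j" for j
      using f that permutes_not_in[OF ip, of j] by (auto simp: weak_compositions_def)
    moreover have "(\<Sum>j<n. (f \<circ> inv_into UNIV p) j) = (\<Sum>j<n. f j)"
      using sum.permute[OF ip, of f] by simp
    ultimately show "f \<circ> inv_into UNIV p \<in> weak_compositions n k" using f
      by (auto simp: weak_compositions_def)
  next
    fix g assume g: "g \<in> weak_compositions n k"
    show "g \<circ> p \<circ> inv_into UNIV p = g" using permutes_inverses(1)[OF pn] by (auto simp: fun_eq_iff)
    have "(g \<circ> p) j = 0" if "n \<le> j" for j
      using g that permutes_not_in[OF pn, of j] by (auto simp: weak_compositions_def)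
    moreover have "(\<Sum>j<n. (g \<circ> p) j) = (\<Sum>j<n. g j)"
      using sum.permute[OF pn, of g] by simp
    ultimately show "g \<circ> p \<in> weak_compositions n k" using g by (auto simp: weak_compositions_def)
  qed simp
  also have "\<dots> = hsym ys k" unfolding hsym_weak_compositions n_def ..
  finally show ?thesis .
qed


definition esupn :: "nat \<Rightarrow> 'a list \<Rightarrow> 'a list \<Rightarrow> 'a::comm_ring_1" where
  "esupn K X W = (\<Sum>i=0..K. (-1)^(K-i) * esym X i * hsym W (K-i))"

lemma esup_esupn: "esup k X W = (if k < 0 then 0 else esupn (nat k) X W)"
  by (simp add: esup_def esupn_def)

lemma esup_int [simp]: "esup (int K) X W = esupn K X W"
  by (simp add: esup_esupn)

lemma esupn_0 [simp]: "esupn 0 X W = 1"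
  by (simp add: esupn_def)

lemma esupn_snoc_X: "esupn (Suc K) (X @ [v]) W = esupn (Suc K) X W + v * esupn K X W"
proof -
  have "esupn (Suc K) (X @ [v]) W = (-1)^(Suc K) * esym (X @ [v]) 0 * hsym W (Suc K)
      + (\<Sum>i=0..K. (-1)^(K-i) * esym (X @ [v]) (Suc i) * hsym W (K-i))"
    unfolding esupn_def by (subst sum.atLeast0_atMost_Suc_shift) simp
  also have "\<dots> = ((-1)^(Suc K) * esym X 0 * hsym W (Suc K)
      + (\<Sum>i=0..K. (-1)^(K-i) * esym X (Suc i) * hsym W (K-i)))
      + v * (\<Sum>i=0..K. (-1)^(K-i) * esym X i * hsym W (K-i))"
    by (simp add: esym_snoc algebra_simps sum.distrib sum_distrib_left)
  also have "\<dots> = esupn (Suc K) X W + v * esupn K X W"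
    unfolding esupn_def sum.atLeast0_atMost_Suc_shift by simp
  finally show ?thesis .
qed

lemma esupn_Suc_split_top:
  "esupn (Suc K) X W
     = (\<Sum>i=0..K. (-1)^(Suc (K-i)) * esym X i * hsym W (Suc (K-i))) + esym X (Suc K)"
proof -
  have "esupn (Suc K) X W
      = (\<Sum>i=0..K. (-1)^(Suc K-i) * esym X i * hsym W (Suc K-i)) + esym X (Suc K)"
    unfolding esupn_def by (subst sum.atLeast0_atMost_Suc) simp
  also have "(\<Sum>i=0..K. (-1)^(Suc K-i) * esym X i * hsym W (Suc K-i))
      = (\<Sum>i=0..K. (-1)^(Suc (K-i)) * esym X i * hsym W (Suc (K-i)))"
    by (intro sum.cong refl) (simp add: Suc_diff_le)
  finally show ?thesis .
qed

lemma esupn_snoc_W: "esupn (Suc K) X (W @ [v]) = esupn (Suc K) X W - v * esupn K X (W @ [v])"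
proof -
  have "esupn (Suc K) X (W @ [v]) = (\<Sum>i=0..K. (-1)^(Suc (K-i)) * esym X i * hsym W (Suc (K-i)))
     + (\<Sum>i=0..K. (-1)^(Suc (K-i)) * esym X i * (v * hsym (W @ [v]) (K-i))) + esym X (Suc K)"
    unfolding esupn_Suc_split_top by (simp only: hsym_snoc distrib_left sum.distrib)
  also have "(\<Sum>i=0..K. (-1)^(Suc (K-i)) * esym X i * (v * hsym (W @ [v]) (K-i)))
      = - (v * esupn K X (W @ [v]))"
    unfolding esupn_def by (simp add: sum_distrib_left algebra_simps sum_negf[symmetric])
  finally show ?thesis unfolding esupn_Suc_split_top[of K X W] by simp
qed

lemma esupn_Nil_Nil: "esupn (Suc K) [] [] = 0"
  unfolding esupn_def
proof (intro sum.neutral ballI)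
  fix i assume "i \<in> {0..Suc K}"
  show "(-1)^(Suc K-i) * esym [] i * hsym [] (Suc K-i) = (0::'a)"
    by (cases i) (simp_all add: esym_eq_0_if_length_less)
qed

lemma esupn_Nil_if_length_less: "length X < K \<Longrightarrow> esupn K X [] = 0"
  unfolding esupn_def
proof (intro sum.neutral ballI)
  fix i assume "length X < K" "i \<in> {0..K}"
  then show "(-1)^(K-i) * esym X i * hsym [] (K-i) = 0"
  proof (cases "i = K")
    case False
    then obtain j where "K - i = Suc j" using \<open>i \<in> {0..K}\<close>
      by (metis Suc_diff_Suc atLeastAtMost_iff le_neq_implies_less)
    then show ?thesis by simp
  qed (simp add: esym_eq_0_if_length_less \<open>length X < K\<close>)
qed

lemma esup_cong_mset:
  assumes "mset X = mset X'" "mset W = mset W'"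
  shows "esup k X W = esup k X' W'"
  unfolding esup_def using esym_cong_mset[OF assms(1)] hsym_cong_mset[OF assms(2)] by simp

lemma esup_append_zeros: "esup k X (W @ replicate m 0) = esup k X W"
proof (induction m)
  case (Suc m)
  have "W @ replicate (Suc m) 0 = (W @ replicate m 0) @ [0]"
    by (simp add: replicate_append_same[symmetric])
  then show ?case using Suc by (simp only: esup_def hsym_snoc_zero)
qed simp

section \<open>Column expansion of the supersymmetric entries\<close>

definition count_below :: "int set \<Rightarrow> int \<Rightarrow> nat" where
  "count_below S v = card {t\<in>S. t < v}"

text \<open>A set \<open>S\<close> of integers encodes a lattice path, equivalently a strictly increasing column
  filling: its \<open>t\<close>-th smallest element is the entry of the cell of content \<open>c - t\<close>, where
  \<open>c\<close> is the content of the top cell. \<open>\<phi> s d\<close> is the weight of entry \<open>s\<close> in a cell of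
  content \<open>d\<close>.\<close>
definition path_weight :: "(int \<Rightarrow> int \<Rightarrow> 'a::comm_ring_1) \<Rightarrow> int \<Rightarrow> int set \<Rightarrow> 'a" where
  "path_weight \<phi> c S = (\<Prod>s\<in>S. \<phi> s (c - int (count_below S s)))"

definition ksubsets :: "int \<Rightarrow> int \<Rightarrow> int \<Rightarrow> int set set" where
  "ksubsets A B k = {S. S \<subseteq> {A..B} \<and> int (card S) = k}"

lemma finite_ksubsets: "finite (ksubsets A B k)"
  unfolding ksubsets_def by (rule finite_subset[of _ "Pow {A..B}"]) auto

lemma ksubsets_nonpos: "k \<le> 0 \<Longrightarrow> ksubsets A B k = (if k = 0 then {{}} else {})"
  unfolding ksubsets_def by (auto dest: finite_subset)

lemma ksubsets_empty: "B < A \<Longrightarrow> ksubsets A B k = (if k = 0 then {{}} else {})"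
  unfolding ksubsets_def by auto

lemma ksubsets_insert_max:
  assumes "A \<le> B"
  shows "ksubsets A B (int (Suc K))
           = ksubsets A (B - 1) (int (Suc K)) \<union> insert B ` ksubsets A (B - 1) (int K)"
proof (intro equalityI subsetI)
  fix S assume S: "S \<in> ksubsets A B (int (Suc K))"
  then have fS: "finite S" unfolding ksubsets_def by (auto dest: finite_subset)
  show "S \<in> ksubsets A (B - 1) (int (Suc K)) \<union> insert B ` ksubsets A (B - 1) (int K)"
  proof (cases "B \<in> S")
    case True
    then have "S = insert B (S - {B})" by auto
    moreover have "S - {B} \<in> ksubsets A (B - 1) (int K)"
      using S True fS unfolding ksubsets_def by (auto simp: card_Diff_singleton_if)
    ultimately show ?thesis by blast
  next
    case False
    have "S \<subseteq> {A..B-1}"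
    proof
      fix s assume "s \<in> S"
      with S False have "s \<in> {A..B}" "s \<noteq> B" by (auto simp: ksubsets_def)
      then show "s \<in> {A..B-1}" by auto
    qed
    then show ?thesis using S by (simp add: ksubsets_def)
  qed
next
  fix S assume S: "S \<in> ksubsets A (B - 1) (int (Suc K)) \<union> insert B ` ksubsets A (B - 1) (int K)"
  show "S \<in> ksubsets A B (int (Suc K))"
  proof (cases "S \<in> ksubsets A (B - 1) (int (Suc K))")
    case True then show ?thesis unfolding ksubsets_def by auto
  next
    case False
    then obtain T where T: "T \<in> ksubsets A (B - 1) (int K)" "S = insert B T" using S by auto
    then have "finite T" "B \<notin> T" unfolding ksubsets_def by (auto dest: finite_subset)
    then show ?thesis using T assms unfolding ksubsets_def by auto
  qed
qed

lemma path_weight_insert_max: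
  assumes "finite S" "\<forall>s\<in>S. s < B"
  shows "path_weight \<phi> c (insert B S) = path_weight \<phi> c S * \<phi> B (c - int (card S))"
proof -
  have "B \<notin> S" using assms by auto
  have top: "count_below (insert B S) B = card S"
  proof -
    have "{t \<in> insert B S. t < B} = S" using assms by auto
    then show ?thesis by (simp add: count_below_def)
  qed
  have rest: "count_below (insert B S) s = count_below S s" if "s \<in> S" for s
  proof -
    have "{t \<in> insert B S. t < s} = {t \<in> S. t < s}" using assms that by auto
    then show ?thesis by (simp add: count_below_def)
  qed
  have "path_weight \<phi> c (insert B S)
      = \<phi> B (c - int (count_below (insert B S) B))
        * (\<Prod>s\<in>S. \<phi> s (c - int (count_below (insert B S) s)))"
    unfolding path_weight_def using assms \<open>B \<notin> S\<close> by simp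
  also have "\<dots> = \<phi> B (c - int (card S)) * path_weight \<phi> c S"
    unfolding path_weight_def top by (simp add: rest cong: prod.cong)
  finally show ?thesis by (simp add: mult.commute)
qed

lemma sum_ksubsets_insert_max:
  assumes "A \<le> B"
  shows "(\<Sum>S\<in>ksubsets A B (int (Suc K)). path_weight \<phi> c S)
       = (\<Sum>S\<in>ksubsets A (B - 1) (int (Suc K)). path_weight \<phi> c S)
         + \<phi> B (c - int K) * (\<Sum>S\<in>ksubsets A (B - 1) (int K). path_weight \<phi> c S)"
proof -
  have disj: "ksubsets A (B - 1) (int (Suc K)) \<inter> insert B ` ksubsets A (B - 1) (int K) = {}"
    unfolding ksubsets_def by auto
  have inj: "inj_on (insert B) (ksubsets A (B - 1) (int K))"
  proof (rule inj_onI)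
    fix S T assume "S \<in> ksubsets A (B - 1) (int K)" "T \<in> ksubsets A (B - 1) (int K)"
      and eq: "insert B S = insert B T"
    then have "B \<notin> S" "B \<notin> T" by (auto simp: ksubsets_def)
    then show "S = T" using eq by (metis Diff_insert_absorb)
  qed
  have new: "path_weight \<phi> c (insert B S) = path_weight \<phi> c S * \<phi> B (c - int K)"
    if "S \<in> ksubsets A (B - 1) (int K)" for S
  proof -
    have "finite S" "\<forall>s\<in>S. s < B" "int (card S) = int K"
      using that unfolding ksubsets_def by (auto dest: finite_subset)
    then show ?thesis by (simp add: path_weight_insert_max)
  qed
  have "(\<Sum>S\<in>ksubsets A B (int (Suc K)). path_weight \<phi> c S)
      = (\<Sum>S\<in>ksubsets A (B - 1) (int (Suc K)). path_weight \<phi> c S)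
        + (\<Sum>S\<in>insert B ` ksubsets A (B - 1) (int K). path_weight \<phi> c S)"
    unfolding ksubsets_insert_max[OF assms]
    by (rule sum.union_disjoint[OF finite_ksubsets finite_imageI[OF finite_ksubsets] disj])
  then show ?thesis
    by (simp add: sum.reindex[OF inj] new sum_distrib_left mult.commute)
qed

lemma alph_empty: "B < A \<Longrightarrow> alph y A B = []"
  by (simp add: alph_def)

lemma alph_snoc: "A \<le> B \<Longrightarrow> alph y A B = alph y A (B - 1) @ [y B]"
  by (simp add: alph_def upto_rec2)

lemma length_alph: "length (alph y A B) = nat (B - A + 1)"
  by (simp add: alph_def)

lemma esup_alph_snoc:
  fixes y z :: "int \<Rightarrow> 'a::comm_ring_1"
  assumes "A \<le> B"
  shows "esup (int (Suc K)) (alph y A B) (alph z (A + c) (B + c - int K))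
       = esup (int (Suc K)) (alph y A (B - 1)) (alph z (A + c) (B + c - int K - 1))
         + (y B - z (B + c - int K)) * esup (int K) (alph y A (B - 1)) (alph z (A + c) (B + c - int K))"
proof -
  define w where "w = B + c - int K"
  define Y where "Y = alph y A (B - 1)"
  have Y: "alph y A B = Y @ [y B]" using assms by (simp add: Y_def alph_snoc)
  show ?thesis
  proof (cases "A + c \<le> w")
    case True
    have Z: "alph z (A + c) w = alph z (A + c) (w - 1) @ [z w]" using True by (simp add: alph_snoc)
    have "esupn (Suc K) (Y @ [y B]) (alph z (A + c) w)
        = esupn (Suc K) Y (alph z (A + c) w) + y B * esupn K Y (alph z (A + c) w)"
      by (rule esupn_snoc_X)
    also have "\<dots> = esupn (Suc K) Y (alph z (A + c) (w - 1))
        - z w * esupn K Y (alph z (A + c) w) + y B * esupn K Y (alph z (A + c) w)"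
      unfolding Z by (simp only: esupn_snoc_W)
    finally have "esupn (Suc K) (Y @ [y B]) (alph z (A + c) w)
        = esupn (Suc K) Y (alph z (A + c) (w - 1)) + (y B - z w) * esupn K Y (alph z (A + c) w)"
      by (simp add: algebra_simps)
    then show ?thesis by (simp del: of_nat_Suc add: Y Y_def w_def)
  next
    case False
    then have Z: "alph z (A + c) w = []" "alph z (A + c) (w - 1) = []" by (auto intro: alph_empty)
    have "esupn K Y [] = 0"
      using False assms
      by (intro esupn_Nil_if_length_less) (simp add: Y_def length_alph w_def nat_less_iff)
    then show ?thesis using Z by (simp del: of_nat_Suc add: Y Y_def w_def esupn_snoc_X)
  qed
qed

lemma esup_alph_eq_sum_path_weight_empty:
  fixes y z :: "int \<Rightarrow> 'a::comm_ring_1"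
  assumes "B < A"
  shows "esup (int K) (alph y A B) (alph z (A + c) (B + c - int K + 1))
       = (\<Sum>S\<in>ksubsets A B (int K). path_weight (\<lambda>s d. y s - z (s + d)) c S)"
proof (cases K)
  case 0
  then show ?thesis by (simp add: esup_esupn ksubsets_nonpos path_weight_def)
next
  case (Suc K')
  have "alph y A B = []" "alph z (A + c) (B + c - int K + 1) = []"
    using assms Suc by (auto intro: alph_empty)
  then show ?thesis using Suc assms by (simp del: of_nat_Suc add: esupn_Nil_Nil ksubsets_empty)
qed

lemma esup_alph_int_eq_sum_path_weight:
  fixes y z :: "int \<Rightarrow> 'a::comm_ring_1"
  assumes "A - 1 \<le> B"
  shows "esup (int K) (alph y A B) (alph z (A + c) (B + c - int K + 1))
       = (\<Sum>S\<in>ksubsets A B (int K). path_weight (\<lambda>s d. y s - z (s + d)) c S)"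
  using assms
proof (induction B arbitrary: K rule: int_ge_induct)
  case base
  then show ?case using esup_alph_eq_sum_path_weight_empty[of "A - 1" A] by simp
next
  case (step B)
  show ?case
  proof (cases K)
    case 0
    then show ?thesis by (simp add: esup_esupn ksubsets_nonpos path_weight_def)
  next
    case (Suc K')
    let ?W = "\<lambda>B K. \<Sum>S\<in>ksubsets A B K. path_weight (\<lambda>s d. y s - z (s + d)) c S"
    have AB: "A \<le> B + 1" using step.hyps by simp
    have "esup (int K) (alph y A (B + 1)) (alph z (A + c) (B + 1 + c - int K + 1))
        = esup (int (Suc K')) (alph y A (B + 1)) (alph z (A + c) (B + 1 + c - int K'))"
      using Suc by (simp add: algebra_simps)
    also have "\<dots> = esup (int (Suc K')) (alph y A B) (alph z (A + c) (B + c - int (Suc K') + 1))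
        + (y (B + 1) - z (B + 1 + c - int K'))
          * esup (int K') (alph y A B) (alph z (A + c) (B + c - int K' + 1))"
      using esup_alph_snoc[OF AB, where K = K' and c = c and y = y and z = z]
      by (simp add: algebra_simps)
    also have "\<dots> = ?W B (int (Suc K')) + (y (B + 1) - z (B + 1 + c - int K')) * ?W B (int K')"
      unfolding step.IH ..
    also have "\<dots> = ?W (B + 1) (int K)"
      using sum_ksubsets_insert_max[OF AB, where K = K' and \<phi> = "\<lambda>s d. y s - z (s + d)" and c = c]
        Suc by (simp add: algebra_simps)
    finally show ?thesis .
  qed
qed

lemma esup_alph_eq_sum_path_weight:
  fixes y z :: "int \<Rightarrow> 'a::comm_ring_1"
  shows "esup k (alph y A B) (alph z (A + c) (B + c - k + 1))
       = (\<Sum>S\<in>ksubsets A B k. path_weight (\<lambda>s d. y s - z (s + d)) c S)"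
proof (cases "k < 0")
  case True
  then show ?thesis by (simp add: esup_esupn ksubsets_nonpos)
next
  case False
  then obtain K where K: "k = int K" by (metis nonneg_int_cases not_less)
  show ?thesis
  proof (cases "A - 1 \<le> B")
    case True
    then show ?thesis unfolding K by (rule esup_alph_int_eq_sum_path_weight)
  next
    case False
    then show ?thesis unfolding K by (intro esup_alph_eq_sum_path_weight_empty) simp
  qed
qed

section \<open>Swapping tails of lattice paths\<close>

lemma count_below_plus_1:
  assumes "finite X"
  shows "count_below X (v + 1) = count_below X v + (if v \<in> X then 1 else 0)"
proof -
  have "{t\<in>X. t < v + 1} = {t\<in>X. t < v} \<union> (if v \<in> X then {v} else {})"
    by (auto simp: order.order_iff_strict)
  moreover have "finite {t\<in>X. t < v}" using assms by auto
  ultimately show ?thesis unfolding count_below_def by (auto simp: card_insert_if)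
qed

lemma count_below_le_card: "finite X \<Longrightarrow> count_below X v \<le> card X"
  unfolding count_below_def by (intro card_mono) auto

lemma count_below_eq_0: "(\<forall>t\<in>X. v \<le> t) \<Longrightarrow> count_below X v = 0"
proof -
  assume "\<forall>t\<in>X. v \<le> t"
  then have E: "{t \<in> X. t < v} = {}" by force
  show ?thesis unfolding count_below_def E by simp
qed

lemma count_below_eq_card: "(\<forall>t\<in>X. t < v) \<Longrightarrow> count_below X v = card X"
proof -
  assume "\<forall>t\<in>X. t < v"
  then have E: "{t \<in> X. t < v} = X" by force
  show ?thesis unfolding count_below_def E by simp
qed

lemma count_below_le:
  assumes "X \<subseteq> {A..B}"
  shows "int (count_below X v) \<le> max 0 (v - A)"
proof -
  have "{t\<in>X. t < v} \<subseteq> {A..v-1}" using assms by auto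
  then have "card {t\<in>X. t < v} \<le> card {A..v-1}" by (intro card_mono) auto
  then show ?thesis unfolding count_below_def by simp
qed

lemma card_minus_count_below_le:
  assumes "finite X" "X \<subseteq> {A..B}"
  shows "int (card X) - int (count_below X v) \<le> max 0 (B - v + 1)"
proof -
  have "X = {t\<in>X. t < v} \<union> {t\<in>X. v \<le> t}" "{t\<in>X. t < v} \<inter> {t\<in>X. v \<le> t} = {}" by auto
  then have "card X = count_below X v + card {t\<in>X. v \<le> t}" unfolding count_below_def using assms(1)
    by (metis (no_types, lifting) card_Un_disjoint finite_Un)
  moreover have "{t\<in>X. v \<le> t} \<subseteq> {v..B}" using assms by auto
  then have "card {t\<in>X. v \<le> t} \<le> card {v..B}" by (intro card_mono) auto
  ultimately show ?thesis by simp
qed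

lemma count_below_ksubsets_past:
  assumes "S \<in> ksubsets A B k" "B < v"
  shows "int (count_below S v) = k"
proof -
  have "\<forall>t\<in>S. t < v" using assms by (force simp: ksubsets_def)
  then show ?thesis using assms(1) by (simp add: count_below_eq_card ksubsets_def)
qed

definition lower :: "int \<Rightarrow> int set \<Rightarrow> int set" where "lower v X = {s\<in>X. s < v}"

definition upper :: "int \<Rightarrow> int set \<Rightarrow> int set" where "upper v X = {s\<in>X. v \<le> s}"

lemma lower_upper_simps[simp]:
  "lower v (lower v X \<union> upper v Y) = lower v X"
  "upper v (lower v X \<union> upper v Y) = upper v Y"
  "lower v X \<union> upper v X = X"
  by (auto simp: lower_def upper_def)

lemma count_below_lower_upper_le:
  assumes "v \<le> v0"
  shows "count_below (lower v0 X \<union> upper v0 Y) v = count_below X v"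
proof -
  have "{t \<in> lower v0 X \<union> upper v0 Y. t < v} = {t\<in>X. t < v}" using assms
    by (auto simp: lower_def upper_def)
  then show ?thesis by (simp add: count_below_def)
qed

lemma count_below_split:
  assumes "finite Y" "v0 \<le> s"
  shows "int (count_below Y s) = int (count_below Y v0) + int (card {t\<in>Y. v0 \<le> t \<and> t < s})"
proof -
  have "{t\<in>Y. t < s} = {t\<in>Y. t < v0} \<union> {t\<in>Y. v0 \<le> t \<and> t < s}" using assms by auto
  moreover have "{t\<in>Y. t < v0} \<inter> {t\<in>Y. v0 \<le> t \<and> t < s} = {}" by auto
  ultimately have "card {t\<in>Y. t < s} = card {t\<in>Y. t < v0} + card {t\<in>Y. v0 \<le> t \<and> t < s}"
    using assms by (simp add: card_Un_disjoint)
  then show ?thesis by (simp add: count_below_def)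
qed

lemma count_below_lower_upper_ge:
  assumes "finite X" "finite Y" "v0 \<le> s"
  shows "int (count_below (lower v0 X \<union> upper v0 Y) s)
    = int (count_below X v0) + int (count_below Y s) - int (count_below Y v0)"
proof -
  have "{t \<in> lower v0 X \<union> upper v0 Y. t < s} = lower v0 X \<union> {t\<in>Y. v0 \<le> t \<and> t < s}"
    using assms by (auto simp: lower_def upper_def)
  moreover have "lower v0 X \<inter> {t\<in>Y. v0 \<le> t \<and> t < s} = {}" by (auto simp: lower_def)
  ultimately have "count_below (lower v0 X \<union> upper v0 Y) s
      = card (lower v0 X) + card {t\<in>Y. v0 \<le> t \<and> t < s}"
    using assms by (simp add: count_below_def card_Un_disjoint lower_def)
  moreover have "card (lower v0 X) = count_below X v0" by (simp add: lower_def count_below_def)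
  ultimately show ?thesis using count_below_split[OF assms(2,3)] by simp
qed

definition lower_weight :: "(int \<Rightarrow> int \<Rightarrow> 'a::comm_ring_1) \<Rightarrow> int \<Rightarrow> int \<Rightarrow> int set \<Rightarrow> 'a" where
  "lower_weight \<phi> v0 c X = (\<Prod>s\<in>lower v0 X. \<phi> s (c - int (count_below X s)))"

definition upper_weight :: "(int \<Rightarrow> int \<Rightarrow> 'a::comm_ring_1) \<Rightarrow> int \<Rightarrow> int \<Rightarrow> int set \<Rightarrow> 'a" where
  "upper_weight \<phi> v0 c X = (\<Prod>s\<in>upper v0 X. \<phi> s (c - int (count_below X s)))"

lemma path_weight_lower_upper:
  assumes "finite X"
  shows "path_weight \<phi> c X = lower_weight \<phi> v0 c X * upper_weight \<phi> v0 c X"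
proof -
  have "X = lower v0 X \<union> upper v0 X" by (auto simp: lower_def upper_def)
  moreover have "lower v0 X \<inter> upper v0 X = {}" by (auto simp: lower_def upper_def)
  moreover have "finite (lower v0 X)" "finite (upper v0 X)" using assms
    by (auto simp: lower_def upper_def)
  ultimately show ?thesis unfolding path_weight_def lower_weight_def upper_weight_def
    by (metis prod.union_disjoint)
qed

lemma path_weight_swap_tails:
  assumes "finite X" "finite Y" "c1 - int (count_below X v0) = c2 - int (count_below Y v0)"
  shows "path_weight \<phi> c1 (lower v0 X \<union> upper v0 Y) = lower_weight \<phi> v0 c1 X * upper_weight \<phi> v0 c2 Y"
proof -
  have d: "lower v0 X \<inter> upper v0 Y = {}" by (auto simp: lower_def upper_def)
  have f: "finite (lower v0 X)" "finite (upper v0 Y)" using assms by (auto simp: lower_def upper_def)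
  have 1: "(\<Prod>s\<in>lower v0 X. \<phi> s (c1 - int (count_below (lower v0 X \<union> upper v0 Y) s)))
    = lower_weight \<phi> v0 c1 X"
    unfolding lower_weight_def
  proof (intro prod.cong refl)
    fix s assume "s \<in> lower v0 X"
    then have "s \<le> v0" by (simp add: lower_def)
    then show "\<phi> s (c1 - int (count_below (lower v0 X \<union> upper v0 Y) s))
      = \<phi> s (c1 - int (count_below X s))"
      by (simp add: count_below_lower_upper_le)
  qed
  have 2: "(\<Prod>s\<in>upper v0 Y. \<phi> s (c1 - int (count_below (lower v0 X \<union> upper v0 Y) s)))
    = upper_weight \<phi> v0 c2 Y"
    unfolding upper_weight_def
  proof (intro prod.cong refl)
    fix s assume "s \<in> upper v0 Y"
    then have "v0 \<le> s" by (simp add: upper_def)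
    have e: "int (count_below (lower v0 X \<union> upper v0 Y) s)
      = int (count_below X v0) + int (count_below Y s) - int (count_below Y v0)"
      using count_below_lower_upper_ge[OF assms(1,2) \<open>v0 \<le> s\<close>] .
    have "c1 - int (count_below (lower v0 X \<union> upper v0 Y) s) = c2 - int (count_below Y s)"
      unfolding e using assms(3) by linarith
    then show "\<phi> s (c1 - int (count_below (lower v0 X \<union> upper v0 Y) s))
      = \<phi> s (c2 - int (count_below Y s))"
      by simp
  qed
  show ?thesis unfolding path_weight_def prod.union_disjoint[OF f d] 1 2 ..
qed

lemma ksubsets_swap_tails:
  assumes X: "X \<in> ksubsets A B (c - d + 1)" and Y: "Y \<in> ksubsets A' B' (c' - d' + 1)"
    and v: "A \<le> v" "v \<le> B' + 1"
    and heights: "c - int (count_below X v) = c' - int (count_below Y v)"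
  shows "lower v X \<union> upper v Y \<in> ksubsets A B' (c - d' + 1)"
proof -
  have fin: "finite X" "finite Y" using X Y by (auto simp: ksubsets_def dest: finite_subset)
  have "lower v X \<union> upper v Y \<subseteq> {A..B'}"
    using X Y v unfolding ksubsets_def lower_def upper_def by force
  moreover have "card (lower v X) = count_below X v"
    by (simp add: lower_def count_below_def)
  moreover have "card Y = count_below Y v + card (upper v Y)"
  proof -
    have "Y = lower v Y \<union> upper v Y" "lower v Y \<inter> upper v Y = {}"
      by (auto simp: lower_def upper_def)
    then have "card Y = card (lower v Y) + card (upper v Y)"
      using fin(2) by (metis card_Un_disjoint finite_Un)
    then show ?thesis by (simp add: lower_def count_below_def)
  qed
  moreover have "lower v X \<inter> upper v Y = {}" "finite (lower v X)" "finite (upper v Y)"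
    using fin by (auto simp: lower_def upper_def)
  ultimately show ?thesis
    using Y heights by (simp add: ksubsets_def card_Un_disjoint)
qed

lemma int_intermediate_value:
  fixes g :: "int \<Rightarrow> int"
  assumes step: "\<And>v. \<bar>g (v + 1) - g v\<bar> \<le> 1" and "l0 \<le> h0" "g l0 \<le> 0" "0 \<le> g h0"
  shows "\<exists>v. l0 \<le> v \<and> v \<le> h0 \<and> g v = 0"
  using assms(2-4)
proof (induction "nat (h0 - l0)" arbitrary: l0)
  case 0
  then have "l0 = h0" by simp
  then show ?case using 0 by auto
next
  case (Suc k)
  show ?case
  proof (cases "g l0 = 0")
    case True then show ?thesis using Suc.prems by auto
  next
    case False
    then have "g l0 < 0" using Suc.prems by simp
    then have "g (l0 + 1) \<le> 0" using step[of l0] by simp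
    moreover have "k = nat (h0 - (l0 + 1))" "l0 + 1 \<le> h0" using Suc.hyps(2) Suc.prems \<open>g l0 < 0\<close> by auto
    ultimately obtain v where "l0 + 1 \<le> v" "v \<le> h0" "g v = 0" using Suc.hyps(1)[of "l0+1"] Suc.prems
      by blast
    then show ?thesis by (intro exI[of _ v]) auto
  qed
qed

lemma equal_height_below:
  fixes c1 c2 :: int
  assumes fin: "finite X1" "finite X2" and less: "c1 < c2"
    and v0: "c2 - int (count_below X2 v0) \<le> c1 - int (count_below X1 v0)"
  shows "\<exists>v\<le>v0. c1 - int (count_below X1 v) = c2 - int (count_below X2 v)"
proof -
  define g where "g v = (c1 - int (count_below X1 v)) - (c2 - int (count_below X2 v))" for v
  have step: "\<bar>g (v + 1) - g v\<bar> \<le> 1" for v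
    unfolding g_def using count_below_plus_1[OF fin(1), of v] count_below_plus_1[OF fin(2), of v]
    by auto
  define vl where "vl = Min (insert v0 (X1 \<union> X2))"
  have vl: "vl \<le> v0" "\<forall>t\<in>X1 \<union> X2. vl \<le> t"
    unfolding vl_def using fin by auto
  then have "count_below X1 vl = 0" "count_below X2 vl = 0"
    by (auto intro: count_below_eq_0)
  then have "g vl \<le> 0" using less by (simp add: g_def)
  moreover have "0 \<le> g v0" using v0 by (simp add: g_def)
  ultimately obtain v where "v \<le> v0" "g v = 0"
    using int_intermediate_value[of g vl v0, OF step vl(1)] by auto
  then show ?thesis by (auto simp: g_def)
qed

text \<open>Two paths whose start and end points are in the wrong relative order must meet: their
  height difference changes sign and moves in steps of at most one.\<close>
lemma crossing_paths_meet:
  fixes a1 a2 b1 b2 c1 c2 d1 d2 :: int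
  assumes X1: "X1 \<in> ksubsets a1 b1 (c1 - d1 + 1)" and X2: "X2 \<in> ksubsets a2 b2 (c2 - d2 + 1)"
    and cc: "c1 < c2" and ha: "a1 - a2 \<le> c2 - c1"
    and hb: "(d1 < d2 \<and> b1 - b2 \<le> d2 - d1) \<or> (d2 < d1 \<and> b2 - b1 \<le> d1 - d2)"
    and v0: "c2 - int (count_below X2 v0) \<le> c1 - int (count_below X1 v0)"
  shows "\<exists>v. a1 \<le> v \<and> v \<le> b1 + 1 \<and> a2 \<le> v \<and> v \<le> b2 + 1
           \<and> c1 - int (count_below X1 v) = c2 - int (count_below X2 v)"
proof -
  have s1: "X1 \<subseteq> {a1..b1}" "int (card X1) = c1 - d1 + 1"
    and s2: "X2 \<subseteq> {a2..b2}" "int (card X2) = c2 - d2 + 1"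
    using X1 X2 by (auto simp: ksubsets_def)
  have f1: "finite X1" and f2: "finite X2" using s1 s2 by (auto dest: finite_subset)
  obtain v where eq: "c1 - int (count_below X1 v) = c2 - int (count_below X2 v)"
    using equal_height_below[OF f1 f2 cc v0] by blast
  have va2: "a2 \<le> v"
  proof (rule ccontr)
    assume "\<not> a2 \<le> v"
    then have "count_below X2 v = 0" using s2(1) by (intro count_below_eq_0) force
    then show False using eq cc by simp
  qed
  have va1: "a1 \<le> v"
  proof (rule ccontr)
    assume "\<not> a1 \<le> v"
    then have "count_below X1 v = 0" using s1(1) by (intro count_below_eq_0) force
    moreover have "int (count_below X2 v) \<le> max 0 (v - a2)" by (rule count_below_le[OF s2(1)])
    ultimately show False using eq cc ha \<open>\<not> a1 \<le> v\<close> by linarith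
  qed
  have "int (card X1) - int (count_below X1 v) \<le> max 0 (b1 - v + 1)"
    "int (card X2) - int (count_below X2 v) \<le> max 0 (b2 - v + 1)"
    by (rule card_minus_count_below_le[OF f1 s1(1)], rule card_minus_count_below_le[OF f2 s2(1)])
  moreover have "count_below X1 v \<le> card X1" "count_below X2 v \<le> card X2"
    using count_below_le_card[OF f1] count_below_le_card[OF f2] by auto
  ultimately have "v \<le> b1 + 1 \<and> v \<le> b2 + 1"
    using hb eq s1(2) s2(2) by linarith
  then show ?thesis using va1 va2 eq by blast
qed

section \<open>The Lindstrom--Gessel--Viennot involution\<close>

lemma prod_remove_two:
  assumes "finite A" "i \<in> A" "j \<in> A" "i \<noteq> j"
  shows "prod g A = g i * g j * prod g (A - {i, j})"
proof -
  have "A = insert i (insert j (A - {i, j}))" using assms by auto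
  then have "prod g A = prod g (insert i (insert j (A - {i, j})))" by simp
  also have "\<dots> = g i * (g j * prod g (A - {i, j}))" using assms by simp
  finally show ?thesis by (simp add: mult.assoc)
qed

lemma permutes_descent:
  assumes perm: "\<sigma> permutes {0..<n}" and ne: "\<sigma> \<noteq> id"
  shows "\<exists>p. Suc p < n \<and> \<sigma> (Suc p) < \<sigma> p"
proof (rule ccontr)
  assume "\<not> ?thesis"
  then have le: "\<sigma> p \<le> \<sigma> (Suc p)" if "Suc p < n" for p using that by (meson not_less)
  have inj: "inj \<sigma>" using perm by (rule permutes_inj)
  have lt: "\<sigma> p < \<sigma> (Suc p)" if "Suc p < n" for p using le[OF that] inj
    by (metis injD le_neq_implies_less n_not_Suc_n)
  have up: "\<sigma> i + k \<le> \<sigma> (i + k)" if "i + k < n" for i k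
    using that proof (induction k)
    case 0 then show ?case by simp
  next
    case (Suc k) then show ?case using lt[of "i + k"] by simp
  qed
  have ge: "i \<le> \<sigma> i" if "i < n" for i using up[of 0 i] that by simp
  have le2: "\<sigma> i \<le> i" if "i < n" for i
  proof -
    have "\<sigma> i + (n - 1 - i) \<le> \<sigma> (i + (n - 1 - i))" using up[of i "n - 1 - i"] that by simp
    moreover have "\<sigma> (n - 1) < n" using perm that by (auto dest: permutes_in_image)
    ultimately show ?thesis using that by simp
  qed
  have "\<sigma> x = x" for x
  proof (cases "x < n")
    case True then show ?thesis using ge le2 by (simp add: le_antisym)
  next
    case False then show ?thesis using perm by (auto intro: permutes_not_in)
  qed
  then show False using ne by (auto simp: fun_eq_iff)
qed

text \<open>A path from column \<open>j\<close> to column \<open>i\<close> is a strictly increasing filling, by entries from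
  \<open>{a j..b i}\<close>, of a column of cells with contents \<open>ctop j\<close> down to \<open>cbot i\<close>.\<close>
locale lgv =
  fixes n :: nat and ctop cbot a b :: "nat \<Rightarrow> int" and \<phi> :: "int \<Rightarrow> int \<Rightarrow> 'a::comm_ring_1"
begin

definition paths :: "nat \<Rightarrow> nat \<Rightarrow> int set set" where
  "paths j i = ksubsets (a j) (b i) (ctop j - cbot i + 1)"

definition families :: "((nat \<Rightarrow> nat) \<times> (nat \<Rightarrow> int set)) set" where
  "families = Sigma {\<sigma>. \<sigma> permutes {0..<n}} (\<lambda>\<sigma>. PiE {0..<n} (\<lambda>i. paths (\<sigma> i) i))"

definition signed_weight :: "(nat \<Rightarrow> nat) \<times> (nat \<Rightarrow> int set) \<Rightarrow> 'a" where
  "signed_weight F = signof (fst F) * (\<Prod>i=0..<n. path_weight \<phi> (ctop (fst F i)) (snd F i))"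

lemma finite_paths: "finite (paths j i)"
  unfolding paths_def by (rule finite_ksubsets)

lemma finite_families: "finite families"
  unfolding families_def
  by (intro finite_SigmaI finite_PiE finite_paths) (auto intro: finite_permutations)

lemma det_eq_sum_families:
  "det (mat n n (\<lambda>(i,j). \<Sum>S\<in>paths j i. path_weight \<phi> (ctop j) S)) = (\<Sum>F\<in>families. signed_weight F)"
proof -
  let ?f = "\<lambda>(i,j). \<Sum>S\<in>paths j i. path_weight \<phi> (ctop j) S"
  have "det (mat n n ?f) = (\<Sum>p\<in>{p. p permutes {0..<n}}. signof p * (\<Prod>i=0..<n. mat n n ?f $$ (i, p i)))"
    by (rule det_def') simp
  also have "\<dots> = (\<Sum>p\<in>{p. p permutes {0..<n}}. signof p
    * (\<Prod>i=0..<n. \<Sum>S\<in>paths (p i) i. path_weight \<phi> (ctop (p i)) S))"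
  proof (intro sum.cong refl arg_cong2[where f="(*)"] prod.cong)
    fix p i assume p: "p \<in> {p. p permutes {0..<n}}" and i: "i \<in> {0..<n}"
    then have "p i < n" by (auto dest: permutes_in_image)
    then show "mat n n ?f $$ (i, p i) = (\<Sum>S\<in>paths (p i) i. path_weight \<phi> (ctop (p i)) S)" using i
      by simp
  qed
  also have "\<dots> = (\<Sum>p\<in>{p. p permutes {0..<n}}. \<Sum>g\<in>PiE {0..<n} (\<lambda>i. paths (p i) i). signof p
    * (\<Prod>i=0..<n. path_weight \<phi> (ctop (p i)) (g i)))"
    by (intro sum.cong refl) (simp add: prod_sum_PiE finite_paths sum_distrib_left)
  also have "\<dots> = (\<Sum>F\<in>families. signed_weight F)"
    unfolding families_def signed_weight_def
    by (subst sum.Sigma)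
      (auto intro: finite_permutations finite_PiE finite_paths simp: case_prod_unfold)
  finally show ?thesis .
qed

text \<open>Just before abscissa \<open>v\<close>, path \<open>p\<close> is at height \<open>height \<sigma> S p v\<close>, the content of its next
  cell.\<close>
definition in_window :: "(nat \<Rightarrow> nat) \<Rightarrow> nat \<Rightarrow> int \<Rightarrow> bool" where
  "in_window \<sigma> i v \<longleftrightarrow> a (\<sigma> i) \<le> v \<and> v \<le> b i + 1"

definition height :: "(nat \<Rightarrow> nat) \<Rightarrow> (nat \<Rightarrow> int set) \<Rightarrow> nat \<Rightarrow> int \<Rightarrow> int" where
  "height \<sigma> S i v = ctop (\<sigma> i) - int (count_below (S i) v)"

definition meet :: "(nat \<Rightarrow> nat) \<Rightarrow> (nat \<Rightarrow> int set) \<Rightarrow> int \<Rightarrow> nat \<Rightarrow> nat \<Rightarrow> bool" where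
  "meet \<sigma> S v p q \<longleftrightarrow> p \<noteq> q \<and> p < n \<and> q < n \<and> in_window \<sigma> p v \<and> in_window \<sigma> q v
     \<and> height \<sigma> S p v = height \<sigma> S q v"

definition meets :: "(nat \<Rightarrow> nat) \<Rightarrow> (nat \<Rightarrow> int set) \<Rightarrow> int set" where
  "meets \<sigma> S = {v. \<exists>p q. meet \<sigma> S v p q}"

definition first_meet :: "(nat \<Rightarrow> nat) \<Rightarrow> (nat \<Rightarrow> int set) \<Rightarrow> int" where
  "first_meet \<sigma> S = Min (meets \<sigma> S)"

definition meet_fst :: "(nat \<Rightarrow> nat) \<Rightarrow> (nat \<Rightarrow> int set) \<Rightarrow> nat" where
  "meet_fst \<sigma> S = Min {p. \<exists>q. meet \<sigma> S (first_meet \<sigma> S) p q}"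

definition meet_snd :: "(nat \<Rightarrow> nat) \<Rightarrow> (nat \<Rightarrow> int set) \<Rightarrow> nat" where
  "meet_snd \<sigma> S = Min {q. meet \<sigma> S (first_meet \<sigma> S) (meet_fst \<sigma> S) q}"

definition swap_tails :: "int \<Rightarrow> nat \<Rightarrow> nat \<Rightarrow> (nat \<Rightarrow> nat) \<Rightarrow> (nat \<Rightarrow> int set)
    \<Rightarrow> (nat \<Rightarrow> nat) \<times> (nat \<Rightarrow> int set)" where
  "swap_tails v i j \<sigma> S
    = (\<sigma> \<circ> transpose i j, S(i := lower v (S j) \<union> upper v (S i), j := lower v (S i) \<union> upper v (S j)))"

text \<open>Exchanging the tails at the least meeting point, between the least pair of paths meeting
  there, changes nothing before that point; hence the image makes the same choice
  and the map is an involution.\<close>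
definition swap_first_meet :: "(nat \<Rightarrow> nat) \<times> (nat \<Rightarrow> int set) \<Rightarrow> (nat \<Rightarrow> nat) \<times> (nat \<Rightarrow> int set)" where
  "swap_first_meet F = (case F of (\<sigma>, S) \<Rightarrow>
     swap_tails (first_meet \<sigma> S) (meet_fst \<sigma> S) (meet_snd \<sigma> S) \<sigma> S)"

lemma finite_meets: "finite (meets \<sigma> S)"
proof -
  have "meets \<sigma> S \<subseteq> (\<Union>p<n. {a (\<sigma> p)..b p + 1})"
    unfolding meets_def meet_def in_window_def by auto
  then show ?thesis by (rule finite_subset) auto
qed

lemma first_meet_props:
  assumes "meets \<sigma> S \<noteq> {}"
  shows "meet \<sigma> S (first_meet \<sigma> S) (meet_fst \<sigma> S) (meet_snd \<sigma> S)"
    and "\<And>v. v < first_meet \<sigma> S \<Longrightarrow> v \<notin> meets \<sigma> S"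
proof -
  have v: "first_meet \<sigma> S \<in> meets \<sigma> S" unfolding first_meet_def using finite_meets assms
    by (rule Min_in)
  have "{p. \<exists>q. meet \<sigma> S (first_meet \<sigma> S) p q} \<noteq> {}" using v unfolding meets_def by auto
  moreover have "finite {p. \<exists>q. meet \<sigma> S (first_meet \<sigma> S) p q}"
    by (rule finite_subset[of _ "{..<n}"]) (auto simp: meet_def)
  ultimately have "meet_fst \<sigma> S \<in> {p. \<exists>q. meet \<sigma> S (first_meet \<sigma> S) p q}" unfolding meet_fst_def
    by (metis Min_in)
  then have "{q. meet \<sigma> S (first_meet \<sigma> S) (meet_fst \<sigma> S) q} \<noteq> {}" by auto
  moreover have "finite {q. meet \<sigma> S (first_meet \<sigma> S) (meet_fst \<sigma> S) q}"
    by (rule finite_subset[of _ "{..<n}"]) (auto simp: meet_def)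
  ultimately have "meet_snd \<sigma> S \<in> {q. meet \<sigma> S (first_meet \<sigma> S) (meet_fst \<sigma> S) q}"
    unfolding meet_snd_def by (metis Min_in)
  then show "meet \<sigma> S (first_meet \<sigma> S) (meet_fst \<sigma> S) (meet_snd \<sigma> S)" by simp
  show "\<And>v. v < first_meet \<sigma> S \<Longrightarrow> v \<notin> meets \<sigma> S"
    using Min_le[OF finite_meets] unfolding first_meet_def by force
qed

lemma families_finite_paths:
  assumes "(\<sigma>, S) \<in> families" "p < n"
  shows "finite (S p)"
  using assms unfolding families_def paths_def ksubsets_def by (auto dest: finite_subset)

lemma swap_tails_below:
  assumes F: "(\<sigma>, S) \<in> families" and meet: "meet \<sigma> S v0 i j" and v: "v \<le> v0" and p: "p < n"
    and sw: "swap_tails v0 i j \<sigma> S = (\<sigma>', S')"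
  shows "in_window \<sigma>' p v = in_window \<sigma> (transpose i j p) v" and "height \<sigma>' S' p v
    = height \<sigma> S (transpose i j p) v"
proof -
  have ij: "i \<noteq> j" "i < n" "j < n" "in_window \<sigma> i v0" "in_window \<sigma> j v0" using meet
    by (auto simp: meet_def)
  have \<sigma>': "\<sigma>' = \<sigma> \<circ> transpose i j" and S': "S'
    = S(i := lower v0 (S j) \<union> upper v0 (S i), j := lower v0 (S i) \<union> upper v0 (S j))"
    using sw by (auto simp: swap_tails_def)
  show "in_window \<sigma>' p v = in_window \<sigma> (transpose i j p) v"
    using ij v unfolding \<sigma>' in_window_def by (auto simp: transpose_def)
  show "height \<sigma>' S' p v = height \<sigma> S (transpose i j p) v"
    using ij v unfolding \<sigma>' S' height_def by (auto simp: transpose_def count_below_lower_upper_le)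
qed

lemma transpose_meet_data:
  assumes meet: "meet \<sigma> S v0 i j"
  shows "in_window \<sigma> (transpose i j p) v0 = in_window \<sigma> p v0" and "height \<sigma> S (transpose i j p) v0
    = height \<sigma> S p v0"
  using meet by (auto simp: meet_def transpose_def)

lemma swap_tails_families:
  assumes F: "(\<sigma>, S) \<in> families" and meet: "meet \<sigma> S v0 i j"
  shows "swap_tails v0 i j \<sigma> S \<in> families"
proof -
  have ij: "i \<noteq> j" "i < n" "j < n" "in_window \<sigma> i v0" "in_window \<sigma> j v0" "height \<sigma> S i v0
    = height \<sigma> S j v0"
    using meet by (auto simp: meet_def)
  have perm: "\<sigma> permutes {0..<n}" and SP: "S \<in> PiE {0..<n} (\<lambda>i. paths (\<sigma> i) i)" using F
    by (auto simp: families_def)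
  have new: "lower v0 (S k) \<union> upper v0 (S l) \<in> paths (\<sigma> k) l"
    if kl: "(k = i \<and> l = j) \<or> (k = j \<and> l = i)" for k l
  proof -
    have "S k \<in> paths (\<sigma> k) k" "S l \<in> paths (\<sigma> l) l" using SP kl ij by auto
    moreover have "in_window \<sigma> k v0" "in_window \<sigma> l v0" "height \<sigma> S k v0 = height \<sigma> S l v0"
      using kl ij by auto
    ultimately show ?thesis
      unfolding paths_def in_window_def height_def by (auto intro: ksubsets_swap_tails)
  qed
  have "\<sigma> \<circ> transpose i j permutes {0..<n}"
    using perm ij by (intro permutes_compose permutes_swap_id) auto
  moreover have "S(i := lower v0 (S j) \<union> upper v0 (S i), j := lower v0 (S i) \<union> upper v0 (S j))
      \<in> PiE {0..<n} (\<lambda>p. paths ((\<sigma> \<circ> transpose i j) p) p)"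
    using SP ij new by (auto simp: PiE_def Pi_def extensional_def transpose_def)
  ultimately show ?thesis by (simp add: swap_tails_def families_def)
qed

lemma meet_swap_tails:
  assumes F: "(\<sigma>, S) \<in> families" and meet: "meet \<sigma> S v0 i j" and v: "v \<le> v0"
    and sw: "swap_tails v0 i j \<sigma> S = (\<sigma>', S')"
  shows "meet \<sigma>' S' v p q \<longleftrightarrow> meet \<sigma> S v (transpose i j p) (transpose i j q)"
proof -
  have ij: "i < n" "j < n" using meet by (auto simp: meet_def)
  have tn: "transpose i j p < n \<longleftrightarrow> p < n" for p using ij by (auto simp: transpose_def)
  have tinj: "transpose i j p = transpose i j q \<longleftrightarrow> p = q" for p q
    by (auto simp: transpose_def split: if_splits)
  show ?thesis
  proof
    assume "meet \<sigma>' S' v p q"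
    then show "meet \<sigma> S v (transpose i j p) (transpose i j q)"
      using swap_tails_below[OF F meet v _ sw, of p] swap_tails_below[OF F meet v _ sw, of q] tn tinj
        by (auto simp: meet_def)
  next
    assume "meet \<sigma> S v (transpose i j p) (transpose i j q)"
    then show "meet \<sigma>' S' v p q"
      using swap_tails_below[OF F meet v _ sw, of p] swap_tails_below[OF F meet v _ sw, of q] tn tinj
      unfolding meet_def by (metis tn)
  qed
qed

lemma meet_swap_tails_at:
  assumes F: "(\<sigma>, S) \<in> families" and meet: "meet \<sigma> S v0 i j"
    and sw: "swap_tails v0 i j \<sigma> S = (\<sigma>', S')"
  shows "meet \<sigma>' S' v0 p q \<longleftrightarrow> meet \<sigma> S v0 p q"
proof -
  have ij: "i < n" "j < n" "i \<noteq> j" using meet by (auto simp: meet_def)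
  have tn: "transpose i j p < n \<longleftrightarrow> p < n" for p using ij by (auto simp: transpose_def)
  have tinj: "transpose i j p = transpose i j q \<longleftrightarrow> p = q" for p q
    by (auto simp: transpose_def split: if_splits)
  have "meet \<sigma> S v0 (transpose i j p) (transpose i j q) \<longleftrightarrow> meet \<sigma> S v0 p q"
    unfolding meet_def by (simp only: transpose_meet_data[OF meet] tn tinj)
  then show ?thesis using meet_swap_tails[OF F meet order_refl sw] by simp
qed

lemma first_meet_swap:
  assumes F: "(\<sigma>, S) \<in> families" and B: "meets \<sigma> S \<noteq> {}"
    and sw: "swap_first_meet (\<sigma>, S) = (\<sigma>', S')"
  shows "meets \<sigma>' S' \<noteq> {}" and "first_meet \<sigma>' S' = first_meet \<sigma> S"
    and "meet_fst \<sigma>' S' = meet_fst \<sigma> S" and "meet_snd \<sigma>' S' = meet_snd \<sigma> S"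
proof -
  define v0 i j where "v0 = first_meet \<sigma> S" and "i = meet_fst \<sigma> S" and "j = meet_snd \<sigma> S"
  have meet: "meet \<sigma> S v0 i j" and below: "\<And>v. v < v0 \<Longrightarrow> v \<notin> meets \<sigma> S"
    using first_meet_props[OF B] unfolding v0_def i_def j_def by auto
  have sw': "swap_tails v0 i j \<sigma> S = (\<sigma>', S')" using sw
    by (simp add: swap_first_meet_def v0_def i_def j_def)
  have sh': "meet \<sigma>' S' v0 i j" using meet_swap_tails_at[OF F meet sw'] meet by simp
  then show "meets \<sigma>' S' \<noteq> {}" by (auto simp: meets_def)
  have "first_meet \<sigma>' S' = v0" unfolding first_meet_def
  proof (rule Min_eqI[OF finite_meets])
    show "v0 \<in> meets \<sigma>' S'" using sh' by (auto simp: meets_def)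
    fix v assume "v \<in> meets \<sigma>' S'"
    then obtain p q where pq: "meet \<sigma>' S' v p q" by (auto simp: meets_def)
    show "v0 \<le> v"
    proof (rule ccontr)
      assume "\<not> v0 \<le> v"
      then have "v < v0" by simp
      then have "meet \<sigma> S v (transpose i j p) (transpose i j q)"
        using meet_swap_tails[OF F meet _ sw'] pq by simp
      then have "v \<in> meets \<sigma> S" by (auto simp: meets_def)
      then show False using below \<open>v < v0\<close> by blast
    qed
  qed
  then show "first_meet \<sigma>' S' = first_meet \<sigma> S" by (simp add: v0_def)
  have e1: "{p. \<exists>q. meet \<sigma>' S' v0 p q} = {p. \<exists>q. meet \<sigma> S v0 p q}"
    using meet_swap_tails_at[OF F meet sw'] by blast
  have e2: "{q. meet \<sigma>' S' v0 i q} = {q. meet \<sigma> S v0 i q}" using meet_swap_tails_at[OF F meet sw']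
    by blast
  show "meet_fst \<sigma>' S' = meet_fst \<sigma> S" unfolding meet_fst_def \<open>first_meet \<sigma>' S' = first_meet \<sigma> S\<close>
    using e1 by (simp add: v0_def)
  then show "meet_snd \<sigma>' S' = meet_snd \<sigma> S" unfolding meet_snd_def \<open>first_meet \<sigma>' S' = first_meet \<sigma> S\<close>
    using e2 by (simp add: v0_def i_def)
qed

lemma signed_weight_swap_tails:
  assumes F: "(\<sigma>, S) \<in> families" and meet: "meet \<sigma> S v i j"
  shows "signed_weight (swap_tails v i j \<sigma> S) = - signed_weight (\<sigma>, S)"
proof -
  have ij: "i \<noteq> j" "i < n" "j < n" "height \<sigma> S i v = height \<sigma> S j v"
    using meet by (auto simp: meet_def)
  define \<sigma>' where "\<sigma>' = \<sigma> \<circ> transpose i j"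
  define S' where "S' = S(i := lower v (S j) \<union> upper v (S i), j := lower v (S i) \<union> upper v (S j))"
  have perm: "\<sigma> permutes {0..<n}" using F by (simp add: families_def)
  have "sign \<sigma>' = sign \<sigma> * sign (transpose i j)"
    unfolding \<sigma>'_def
    by (rule sign_compose) (auto intro: permutes_imp_permutation[OF _ perm] permutation_swap_id)
  then have sign: "signof \<sigma>' = - (signof \<sigma> :: 'a)" using ij by (simp add: sign_swap_id)
  let ?w = "\<lambda>\<sigma> S p. path_weight \<phi> (ctop (\<sigma> p)) (S p)"
  have fin: "finite (S i)" "finite (S j)" using families_finite_paths[OF F] ij by auto
  have heights: "ctop (\<sigma> j) - int (count_below (S j) v) = ctop (\<sigma> i) - int (count_below (S i) v)"
    using ij by (simp add: height_def)
  have wi: "?w \<sigma>' S' i = lower_weight \<phi> v (ctop (\<sigma> j)) (S j) * upper_weight \<phi> v (ctop (\<sigma> i)) (S i)"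
    and wj: "?w \<sigma>' S' j = lower_weight \<phi> v (ctop (\<sigma> i)) (S i) * upper_weight \<phi> v (ctop (\<sigma> j)) (S j)"
    unfolding \<sigma>'_def S'_def using ij fin heights by (simp_all add: path_weight_swap_tails)
  have rest: "(\<Prod>p\<in>{0..<n} - {i, j}. ?w \<sigma>' S' p) = (\<Prod>p\<in>{0..<n} - {i, j}. ?w \<sigma> S p)"
    unfolding \<sigma>'_def S'_def by (intro prod.cong refl) (auto simp: transpose_def)
  have split: "prod g {0..<n} = g i * g j * prod g ({0..<n} - {i, j})" for g :: "nat \<Rightarrow> 'a"
    by (rule prod_remove_two) (use ij in auto)
  have "(\<Prod>p=0..<n. ?w \<sigma>' S' p) = (\<Prod>p=0..<n. ?w \<sigma> S p)"
    unfolding split[of "?w \<sigma>' S'"] split[of "?w \<sigma> S"] rest wi wj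
    by (simp add: path_weight_lower_upper[OF fin(1), of _ _ v]
        path_weight_lower_upper[OF fin(2), of _ _ v] algebra_simps)
  then show ?thesis
    using sign by (simp add: swap_tails_def signed_weight_def \<sigma>'_def S'_def)
qed

lemma swap_first_meet_props:
  assumes F: "(\<sigma>, S) \<in> families" and B: "meets \<sigma> S \<noteq> {}"
  shows "swap_first_meet (\<sigma>, S) \<in> families"
    and "meets (fst (swap_first_meet (\<sigma>, S))) (snd (swap_first_meet (\<sigma>, S))) \<noteq> {}"
    and "swap_first_meet (swap_first_meet (\<sigma>, S)) = (\<sigma>, S)"
    and "swap_first_meet (\<sigma>, S) \<noteq> (\<sigma>, S)"
    and "signed_weight (swap_first_meet (\<sigma>, S)) = - signed_weight (\<sigma>, S)"
proof -
  define v0 i j where "v0 = first_meet \<sigma> S" and "i = meet_fst \<sigma> S" and "j = meet_snd \<sigma> S"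
  have meet: "meet \<sigma> S v0 i j"
    using first_meet_props[OF B] unfolding v0_def i_def j_def by auto
  have ij: "i \<noteq> j" "i < n" "j < n" using meet by (auto simp: meet_def)
  obtain \<sigma>' S' where sw: "swap_first_meet (\<sigma>, S) = (\<sigma>', S')"
    by (cases "swap_first_meet (\<sigma>, S)") auto
  have sw': "swap_tails v0 i j \<sigma> S = (\<sigma>', S')"
    using sw by (simp add: swap_first_meet_def v0_def i_def j_def)
  have \<sigma>': "\<sigma>' = \<sigma> \<circ> transpose i j"
    and S': "S' = S(i := lower v0 (S j) \<union> upper v0 (S i), j := lower v0 (S i) \<union> upper v0 (S j))"
    using sw' by (auto simp: swap_tails_def)
  show "swap_first_meet (\<sigma>, S) \<in> families" using swap_tails_families[OF F meet] sw sw' by simp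
  note same_choice = first_meet_swap[OF F B sw]
  show "meets (fst (swap_first_meet (\<sigma>, S))) (snd (swap_first_meet (\<sigma>, S))) \<noteq> {}"
    using same_choice sw by simp
  have "swap_first_meet (\<sigma>', S') = swap_tails v0 i j \<sigma>' S'"
    using same_choice by (simp add: swap_first_meet_def v0_def i_def j_def)
  also have "\<dots> = (\<sigma>, S)"
    unfolding swap_tails_def \<sigma>' S' using ij by (auto simp: fun_eq_iff transpose_def)
  finally show "swap_first_meet (swap_first_meet (\<sigma>, S)) = (\<sigma>, S)" using sw by simp
  have "\<sigma> permutes {0..<n}" using F by (simp add: families_def)
  then have "\<sigma> i \<noteq> \<sigma> j" using ij by (metis permutes_inj injD)
  then have "\<sigma>' \<noteq> \<sigma>" unfolding \<sigma>' by (metis comp_apply transpose_apply_first)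
  then show "swap_first_meet (\<sigma>, S) \<noteq> (\<sigma>, S)" using sw by simp
  show "signed_weight (swap_first_meet (\<sigma>, S)) = - signed_weight (\<sigma>, S)"
    using signed_weight_swap_tails[OF F meet] sw sw' by simp
qed

lemma sum_meeting_families:
  "(\<Sum>F\<in>{F\<in>families. meets (fst F) (snd F) \<noteq> {}}. signed_weight F) = 0"
proof (rule sum_involution_eq_0[where h = swap_first_meet])
  fix F assume "F \<in> {F\<in>families. meets (fst F) (snd F) \<noteq> {}}"
  moreover obtain \<sigma> S where "F = (\<sigma>, S)" by (cases F)
  ultimately have F: "(\<sigma>, S) \<in> families" "meets \<sigma> S \<noteq> {}" by auto
  note P = swap_first_meet_props[OF F]
  show "signed_weight (swap_first_meet F) + signed_weight F = 0" using P \<open>F = (\<sigma>, S)\<close> by simp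
  show "swap_first_meet F \<in> {F\<in>families. meets (fst F) (snd F) \<noteq> {}}" using P \<open>F = (\<sigma>, S)\<close> by simp
  show "swap_first_meet (swap_first_meet F) = F" using P \<open>F = (\<sigma>, S)\<close> by simp
  show "swap_first_meet F \<noteq> F" using P \<open>F = (\<sigma>, S)\<close> by simp
qed

end

text \<open>\<open>ctop t + 2 \<le> cbot (Suc t)\<close> says that columns \<open>t\<close> and \<open>t + 1\<close> have no row in common;
  the flag inequalities are only needed for consecutive columns that do share a row.\<close>
locale lgv_shape = lgv +
  assumes ctop_step: "\<And>t. Suc t < n \<Longrightarrow> ctop t < ctop (Suc t)"
    and cbot_step: "\<And>t. Suc t < n \<Longrightarrow> cbot t < cbot (Suc t)"
    and flag: "\<And>t. Suc t < n \<Longrightarrow> \<not> (ctop t + 2 \<le> cbot (Suc t)) \<Longrightarrow>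
        a t - a (Suc t) \<le> ctop (Suc t) - ctop t \<and> b t - b (Suc t) \<le> cbot (Suc t) - cbot t"
begin

definition nonmeeting :: "(nat \<Rightarrow> int set) set" where
  "nonmeeting = {S \<in> PiE {0..<n} (\<lambda>i. paths i i). \<forall>i v. Suc i < n \<longrightarrow>
     ctop i - int (count_below (S i) v) < ctop (Suc i) - int (count_below (S (Suc i)) v)}"

lemma ctop_mono: "i < j \<Longrightarrow> j < n \<Longrightarrow> ctop i < ctop j"
proof (induction j)
  case 0 then show ?case by simp
next
  case (Suc j)
  then show ?case using ctop_step[of j] by (cases "i = j") auto
qed

lemma cbot_mono: "i < j \<Longrightarrow> j < n \<Longrightarrow> cbot i < cbot j"
proof (induction j)
  case 0 then show ?case by simp
next
  case (Suc j)
  then show ?case using cbot_step[of j] by (cases "i = j") auto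
qed

lemma ctop_mono_le: "i \<le> j \<Longrightarrow> j < n \<Longrightarrow> ctop i \<le> ctop j"
  using ctop_mono by (cases "i = j") (auto simp: less_le)

lemma cbot_mono_le: "i \<le> j \<Longrightarrow> j < n \<Longrightarrow> cbot i \<le> cbot j"
  using cbot_mono by (cases "i = j") (auto simp: less_le)

lemma path_card_nonneg:
  assumes "(\<sigma>, S) \<in> families" "i < n"
  shows "0 \<le> ctop (\<sigma> i) - cbot i + 1"
proof -
  have "S i \<in> paths (\<sigma> i) i" using assms by (auto simp: families_def)
  then show ?thesis unfolding paths_def ksubsets_def by auto
qed

lemma family_respects_gap:
  assumes F: "(\<sigma>, S) \<in> families" and t: "Suc t < n" and nov: "ctop t + 2 \<le> cbot (Suc t)" and i: "i < n"
  shows "t < i \<longleftrightarrow> t < \<sigma> i"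
proof -
  have perm: "\<sigma> permutes {0..<n}" using F by (simp add: families_def)
  define U where "U = {Suc t..<n}"
  have into: "\<sigma> k \<in> U" if "k \<in> U" for k
  proof -
    have k: "k < n" "Suc t \<le> k" using that by (auto simp: U_def)
    have sk: "\<sigma> k < n" using perm k by (auto dest: permutes_in_image)
    have "cbot (Suc t) \<le> cbot k" using k by (intro cbot_mono_le) auto
    moreover have "0 \<le> ctop (\<sigma> k) - cbot k + 1" using path_card_nonneg[OF F k(1)] .
    ultimately have "ctop t < ctop (\<sigma> k)" using nov by linarith
    then have "t < \<sigma> k" using ctop_mono_le[of "\<sigma> k" t] t
      by (metis not_less order.strict_trans1 less_imp_le_nat Suc_lessD)
    then show ?thesis using sk by (simp add: U_def)
  qed
  have inj: "inj_on \<sigma> U" using perm by (meson permutes_inj inj_on_subset subset_UNIV)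
  have img: "\<sigma> ` U = U"
    by (rule card_subset_eq) (use into inj in \<open>auto simp: card_image U_def\<close>)
  show ?thesis
  proof
    assume "t < i" then have "i \<in> U" using i by (simp add: U_def)
    then show "t < \<sigma> i" using into[OF \<open>i \<in> U\<close>] by (simp add: U_def)
  next
    assume "t < \<sigma> i"
    moreover have "\<sigma> i < n" using perm i by (auto dest: permutes_in_image)
    ultimately have "\<sigma> i \<in> U" by (simp add: U_def)
    then obtain k where "k \<in> U" "\<sigma> i = \<sigma> k" using img by (metis imageE)
    then have "i = k" using perm by (metis permutes_inj injD)
    then show "t < i" using \<open>k \<in> U\<close> by (simp add: U_def)
  qed
qed

lemma flag_telescope:
  assumes "j \<le> j'" "j' < n" "\<And>t. j \<le> t \<Longrightarrow> t < j' \<Longrightarrow> \<not> (ctop t + 2 \<le> cbot (Suc t))"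
  shows "a j - a j' \<le> ctop j' - ctop j"
  using assms
proof (induction j')
  case 0 then show ?case by simp
next
  case (Suc k)
  show ?case
  proof (cases "j = Suc k")
    case True then show ?thesis by simp
  next
    case False
    then have jk: "j \<le> k" using Suc.prems by simp
    have "a j - a k \<le> ctop k - ctop j" using Suc.IH[OF jk] Suc.prems by auto
    moreover have "a k - a (Suc k) \<le> ctop (Suc k) - ctop k" using flag[of k] Suc.prems jk by auto
    ultimately show ?thesis by simp
  qed
qed

lemma families_paths:
  assumes "(\<sigma>, S) \<in> families" "i < n"
  shows "S i \<in> ksubsets (a (\<sigma> i)) (b i) (ctop (\<sigma> i) - cbot i + 1)"
  using assms by (auto simp: families_def paths_def)

lemma no_gap_at_descent:
  assumes F: "(\<sigma>, S) \<in> families" and p: "Suc p < n" "\<sigma> (Suc p) < \<sigma> p"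
    and t: "Suc t < n" "t = p \<or> \<sigma> (Suc p) \<le> t \<and> t < \<sigma> p"
  shows "\<not> (ctop t + 2 \<le> cbot (Suc t))"
proof
  assume "ctop t + 2 \<le> cbot (Suc t)"
  then have "t < p \<longleftrightarrow> t < \<sigma> p" "t < Suc p \<longleftrightarrow> t < \<sigma> (Suc p)"
    using family_respects_gap[OF F t(1)] p by auto
  then show False using p t(2) by auto
qed

lemma meets_if_not_id:
  assumes F: "(\<sigma>, S) \<in> families" and ne: "\<sigma> \<noteq> id"
  shows "meets \<sigma> S \<noteq> {}"
proof -
  have perm: "\<sigma> permutes {0..<n}" using F by (simp add: families_def)
  obtain p where p: "Suc p < n" "\<sigma> (Suc p) < \<sigma> p" using permutes_descent[OF perm ne] by blast
  define j1 j2 where "j1 = \<sigma> (Suc p)" and "j2 = \<sigma> p"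
  have j2n: "j2 < n" using perm p by (auto simp: j2_def dest: permutes_in_image)
  have j12: "j1 < j2" using p by (simp add: j1_def j2_def)
  have ovp: "\<not> (ctop p + 2 \<le> cbot (Suc p))"
    using no_gap_at_descent[OF F p] p by simp
  have ovt: "\<not> (ctop t + 2 \<le> cbot (Suc t))" if "j1 \<le> t" "t < j2" for t
    using no_gap_at_descent[OF F p, of t] that j2n by (simp add: j1_def j2_def)
  have ha: "a j1 - a j2 \<le> ctop j2 - ctop j1" using flag_telescope[of j1 j2] j12 j2n ovt by simp
  have hb: "b p - b (Suc p) \<le> cbot (Suc p) - cbot p" using flag[OF p(1) ovp] by simp
  have cc: "ctop j1 < ctop j2" using ctop_mono j12 j2n by simp
  have cbp: "cbot p < cbot (Suc p)" using cbot_step p by simp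
  have X1: "S (Suc p) \<in> ksubsets (a j1) (b (Suc p)) (ctop j1 - cbot (Suc p) + 1)"
    using families_paths[OF F p(1)] by (simp add: j1_def)
  have X2: "S p \<in> ksubsets (a j2) (b p) (ctop j2 - cbot p + 1)" using families_paths[OF F] p
    by (simp add: j2_def)
  define v0 where "v0 = max (b p) (b (Suc p)) + 1"
  have c1: "int (count_below (S (Suc p)) v0) = ctop j1 - cbot (Suc p) + 1"
    using count_below_ksubsets_past[OF X1] by (simp add: v0_def)
  have c2: "int (count_below (S p) v0) = ctop j2 - cbot p + 1"
    using count_below_ksubsets_past[OF X2] by (simp add: v0_def)
  have "ctop j1 - int (count_below (S (Suc p)) v0) \<ge> ctop j2 - int (count_below (S p) v0)"
    using c1 c2 cbp by simp
  then obtain v where v: "a j1 \<le> v" "v \<le> b (Suc p) + 1" "a j2 \<le> v" "v \<le> b p + 1"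
      "ctop j1 - int (count_below (S (Suc p)) v) = ctop j2 - int (count_below (S p) v)"
    using crossing_paths_meet[OF X1 X2 cc ha] hb cbp by blast
  have "meet \<sigma> S v (Suc p) p" using v p unfolding meet_def in_window_def height_def j1_def j2_def
    by auto
  then show ?thesis by (auto simp: meets_def)
qed

lemma meets_if_not_nonmeeting:
  assumes F: "(id, S) \<in> families" and ng: "S \<notin> nonmeeting"
  shows "meets id S \<noteq> {}"
proof -
  have SP: "S \<in> PiE {0..<n} (\<lambda>i. paths i i)" using F by (simp add: families_def)
  obtain i v0 where i: "Suc i < n"
    and v0: "ctop (Suc i) - int (count_below (S (Suc i)) v0) \<le> ctop i - int (count_below (S i) v0)"
    using ng SP unfolding nonmeeting_def by (auto simp: not_less)
  have X1: "S i \<in> ksubsets (a i) (b i) (ctop i - cbot i + 1)" using families_paths[OF F] i by simp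
  have X2: "S (Suc i) \<in> ksubsets (a (Suc i)) (b (Suc i)) (ctop (Suc i) - cbot (Suc i) + 1)"
    using families_paths[OF F i] by simp
  have ov: "\<not> (ctop i + 2 \<le> cbot (Suc i))"
  proof
    assume nov: "ctop i + 2 \<le> cbot (Suc i)"
    have f: "finite (S (Suc i))" using X2 by (auto simp: ksubsets_def dest: finite_subset)
    have "int (count_below (S (Suc i)) v0) \<le> int (card (S (Suc i)))" using count_below_le_card[OF f]
      by simp
    also have "\<dots> = ctop (Suc i) - cbot (Suc i) + 1" using X2 by (simp add: ksubsets_def)
    finally show False using v0 nov by simp
  qed
  have fl: "a i - a (Suc i) \<le> ctop (Suc i) - ctop i" "b i - b (Suc i) \<le> cbot (Suc i) - cbot i"
    using flag[OF i ov] by auto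
  have cc: "ctop i < ctop (Suc i)" using ctop_step i by simp
  have cbp: "cbot i < cbot (Suc i)" using cbot_step i by simp
  obtain v where v: "a i \<le> v" "v \<le> b i + 1" "a (Suc i) \<le> v" "v \<le> b (Suc i) + 1"
      "ctop i - int (count_below (S i) v) = ctop (Suc i) - int (count_below (S (Suc i)) v)"
    using crossing_paths_meet[OF X1 X2 cc fl(1) _ v0] fl(2) cbp by blast
  have "meet id S v i (Suc i)" using v i unfolding meet_def in_window_def height_def by auto
  then show ?thesis by (auto simp: meets_def)
qed

lemma nonmeeting_height_less:
  assumes G: "S \<in> nonmeeting" and "i < i'" "i' < n"
  shows "ctop i - int (count_below (S i) v) < ctop i' - int (count_below (S i') v)"
  using assms(2,3)
proof (induction i')
  case 0 then show ?case by simp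
next
  case (Suc k)
  have step: "ctop k - int (count_below (S k) v) < ctop (Suc k) - int (count_below (S (Suc k)) v)"
    using G Suc.prems unfolding nonmeeting_def by auto
  show ?case
  proof (cases "i = k")
    case True then show ?thesis using step by simp
  next
    case False
    then have "ctop i - int (count_below (S i) v) < ctop k - int (count_below (S k) v)" using Suc
      by simp
    then show ?thesis using step by simp
  qed
qed

lemma nonmeeting_no_meets:
  assumes G: "S \<in> nonmeeting"
  shows "(id, S) \<in> families" "meets id S = {}"
proof -
  show "(id, S) \<in> families" using G by (simp add: nonmeeting_def families_def permutes_id)
  show "meets id S = {}"
  proof (rule ccontr)
    assume "meets id S \<noteq> {}"
    then obtain v p q where meet: "meet id S v p q" by (auto simp: meets_def)
    then have pq: "p \<noteq> q" "p < n" "q < n" "height id S p v = height id S q v" by (auto simp: meet_def)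
    show False
    proof (cases "p < q")
      case True then show False using nonmeeting_height_less[OF G True pq(3), of v] pq
        by (simp add: height_def)
    next
      case False then have qp: "q < p" using pq by simp
      show False using nonmeeting_height_less[OF G qp pq(2), of v] pq by (simp add: height_def)
    qed
  qed
qed

lemma nonmeeting_families: "{F\<in>families. meets (fst F) (snd F) = {}}
  = (\<lambda>S. (id::nat\<Rightarrow>nat, S)) ` nonmeeting"
proof (intro equalityI subsetI)
  fix F assume "F \<in> {F\<in>families. meets (fst F) (snd F) = {}}"
  moreover obtain \<sigma> S where FS: "F = (\<sigma>, S)" by (cases F)
  ultimately have F: "(\<sigma>, S) \<in> families" "meets \<sigma> S = {}" by auto
  have "\<sigma> = id" using meets_if_not_id[OF F(1)] F(2) by blast
  moreover have "S \<in> nonmeeting" using meets_if_not_nonmeeting F \<open>\<sigma> = id\<close> by blast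
  ultimately show "F \<in> (\<lambda>S. (id::nat\<Rightarrow>nat, S)) ` nonmeeting" using FS by blast
next
  fix F assume "F \<in> (\<lambda>S. (id::nat\<Rightarrow>nat, S)) ` nonmeeting"
  then obtain S where "S \<in> nonmeeting" "F = (id, S)" by auto
  then show "F \<in> {F\<in>families. meets (fst F) (snd F) = {}}" using nonmeeting_no_meets by auto
qed

lemma lgv_det:
  "det (mat n n (\<lambda>(i,j). \<Sum>S\<in>paths j i. path_weight \<phi> (ctop j) S))
    = (\<Sum>S\<in>nonmeeting. \<Prod>i=0..<n. path_weight \<phi> (ctop i) (S i))"
proof -
  have split: "families
      = {F\<in>families. meets (fst F) (snd F) \<noteq> {}} \<union> {F\<in>families. meets (fst F) (snd F) = {}}"
    by auto
  have "(\<Sum>F\<in>families. signed_weight F)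
    = (\<Sum>F\<in>{F\<in>families. meets (fst F) (snd F) \<noteq> {}}. signed_weight F)
      + (\<Sum>F\<in>{F\<in>families. meets (fst F) (snd F) = {}}. signed_weight F)"
    by (subst split, rule sum.union_disjoint) (use finite_families in auto)
  also have "\<dots> = (\<Sum>F\<in>(\<lambda>S. (id::nat\<Rightarrow>nat, S)) ` nonmeeting. signed_weight F)"
    using sum_meeting_families nonmeeting_families by simp
  also have "\<dots> = (\<Sum>S\<in>nonmeeting. signed_weight (id, S))"
    by (rule sum.reindex_cong[where l = "\<lambda>S. (id, S)"]) (auto simp: inj_on_def)
  also have "\<dots> = (\<Sum>S\<in>nonmeeting. \<Prod>i=0..<n. path_weight \<phi> (ctop i) (S i))"
    by (simp add: signed_weight_def)
  finally show ?thesis using det_eq_sum_families by simp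
qed

end

section \<open>Super tableaux and \<open>g\<close>-tableaux\<close>

text \<open>Flagged tableaux are normalised to \<open>0\<close> outside \<open>C\<close>, so that each is a unique function.\<close>
definition ssyt :: "(nat \<times> nat) set \<Rightarrow> (nat \<Rightarrow> int) \<Rightarrow> (nat \<Rightarrow> int) \<Rightarrow> (nat \<times> nat \<Rightarrow> int) set" where
  "ssyt C a b = {T. flagged_ssyt C a b T \<and> (\<forall>c. c \<notin> C \<longrightarrow> T c = 0)}"

definition super_tab :: "(nat \<times> nat) set \<Rightarrow> (nat \<Rightarrow> nat \<Rightarrow> int) \<Rightarrow> (nat \<times> nat \<Rightarrow> int)
    \<Rightarrow> (nat \<times> nat) set \<Rightarrow> (nat \<times> nat \<Rightarrow> sentry)" where
  "super_tab C cf T P = (\<lambda>(i, j). if (i, j) \<in> C then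
                       (if (i, j) \<in> P then Pr (T (i, j) + cf i j) else Unp (T (i, j)))
                     else Unp 0)"

lemma finite_ssyt:
  assumes "finite C"
  shows "finite (ssyt C a b)"
proof -
  define R where "R = (\<Union>c\<in>C. {a (snd c)..b (snd c)})"
  have fR: "finite R" using assms by (simp add: R_def)
  have "ssyt C a b \<subseteq> (\<lambda>g c. if c \<in> C then g c else 0) ` PiE C (\<lambda>_. R)"
  proof
    fix T assume T: "T \<in> ssyt C a b"
    have "T = (\<lambda>c. if c \<in> C then restrict T C c else 0)" using T by (auto simp: ssyt_def fun_eq_iff)
    moreover have "restrict T C \<in> PiE C (\<lambda>_. R)" using T
      by (auto simp: ssyt_def flagged_ssyt_def R_def)
    ultimately show "T \<in> (\<lambda>g c. if c \<in> C then g c else 0) ` PiE C (\<lambda>_. R)" by blast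
  qed
  moreover have "finite (PiE C (\<lambda>_. R))" using assms fR by (intro finite_PiE) auto
  ultimately show ?thesis by (meson finite_imageI finite_subset)
qed

lemma super_tabs_eq_image:
  "super_tabs C cf a b = (\<lambda>(T, P). super_tab C cf T P) ` (ssyt C a b \<times> Pow C)"
proof (intro equalityI subsetI)
  fix S assume "S \<in> super_tabs C cf a b"
  then obtain T P where TP: "flagged_ssyt C a b T" "P \<subseteq> C" "S = super_tab C cf T P"
    unfolding super_tabs_def super_tab_def by blast
  define T0 where "T0 c = (if c \<in> C then T c else 0)" for c
  have "T0 \<in> ssyt C a b" using TP(1) unfolding ssyt_def flagged_ssyt_def T0_def by auto
  moreover have "S = super_tab C cf T0 P" using TP(3) by (auto simp: super_tab_def T0_def fun_eq_iff)
  ultimately show "S \<in> (\<lambda>(T, P). super_tab C cf T P) ` (ssyt C a b \<times> Pow C)" using TP(2) by blast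
next
  fix S assume "S \<in> (\<lambda>(T, P). super_tab C cf T P) ` (ssyt C a b \<times> Pow C)"
  then obtain T P where "T \<in> ssyt C a b" "P \<subseteq> C" "S = super_tab C cf T P" by auto
  then show "S \<in> super_tabs C cf a b" unfolding super_tabs_def super_tab_def ssyt_def by blast
qed

lemma super_tab_inj: "inj_on (\<lambda>(T, P). super_tab C cf T P) (ssyt C a b \<times> Pow C)"
proof (rule inj_onI, clarify)
  fix T1 P1 T2 P2 assume 1: "T1 \<in> ssyt C a b" "P1 \<subseteq> C" and 2: "T2 \<in> ssyt C a b" "P2 \<subseteq> C"
    and eq: "super_tab C cf T1 P1 = super_tab C cf T2 P2"
  have c: "super_tab C cf T1 P1 (i, j) = super_tab C cf T2 P2 (i, j)" for i j using eq by simp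
  have "P1 = P2"
  proof (intro equalityI subsetI)
    fix c assume "c \<in> P1" then show "c \<in> P2" using c[of "fst c" "snd c"] 1 2
      by (cases c) (auto simp: super_tab_def split: if_splits)
  next
    fix c assume "c \<in> P2" then show "c \<in> P1" using c[of "fst c" "snd c"] 1 2
      by (cases c) (auto simp: super_tab_def split: if_splits)
  qed
  moreover have "T1 = T2"
  proof
    fix c show "T1 c = T2 c"
    proof (cases "c \<in> C")
      case False
      have "T1 c = 0" "T2 c = 0" using 1(1) 2(1) False unfolding ssyt_def by blast+
      then show ?thesis by simp
    next
      case True then show ?thesis using c[of "fst c" "snd c"] \<open>P1 = P2\<close>
        by (cases c) (auto simp: super_tab_def split: if_splits)
    qed
  qed
  ultimately show "T1 = T2 \<and> P1 = P2" by simp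
qed

definition sentry_wt :: "(int \<Rightarrow> 'a) \<Rightarrow> (int \<Rightarrow> 'a) \<Rightarrow> sentry \<Rightarrow> 'a" where
  "sentry_wt u p e = (case e of Unp t \<Rightarrow> u t | Pr t \<Rightarrow> p t)"

lemma super_tabs_outside: "S \<in> super_tabs C cf a b \<Longrightarrow> c \<notin> C \<Longrightarrow> S c = Unp 0"
  unfolding super_tabs_def by (cases c) auto

lemma finite_super_tabs: "finite C \<Longrightarrow> finite (super_tabs C cf a b)"
  unfolding super_tabs_eq_image by (intro finite_imageI finite_cartesian_product finite_ssyt) auto

text \<open>Choosing for every cell whether its entry is primed is expanding a product of binomials.\<close>
lemma sum_super_tabs_eq_sum_ssyt:
  fixes u p :: "int \<Rightarrow> 'a::comm_ring_1"
  assumes finC: "finite C"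
  shows "(\<Sum>S\<in>super_tabs C cf a b. \<Prod>c\<in>C. sentry_wt u p (S c))
       = (\<Sum>T\<in>ssyt C a b. \<Prod>c\<in>C. u (T c) + p (T c + cf (fst c) (snd c)))"
proof -
  have "(\<Sum>S\<in>super_tabs C cf a b. \<Prod>c\<in>C. sentry_wt u p (S c))
      = (\<Sum>T\<in>ssyt C a b. \<Sum>P\<in>Pow C. \<Prod>c\<in>C. sentry_wt u p (super_tab C cf T P c))"
    unfolding super_tabs_eq_image sum.reindex[OF super_tab_inj]
    by (subst sum.cartesian_product) (simp add: case_prod_unfold)
  also have "\<dots> = (\<Sum>T\<in>ssyt C a b. \<Prod>c\<in>C. u (T c) + p (T c + cf (fst c) (snd c)))"
  proof (intro sum.cong refl)
    fix T
    define f1 where "f1 c = p (T c + cf (fst c) (snd c))" for c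
    define f2 where "f2 c = u (T c)" for c
    have "(\<Prod>c\<in>C. sentry_wt u p (super_tab C cf T P c)) = (\<Prod>c\<in>P. f1 c) * (\<Prod>c\<in>C - P. f2 c)"
      if P: "P \<in> Pow C" for P
    proof -
      have "C = P \<union> (C - P)" "P \<inter> (C - P) = {}" "finite P" "finite (C - P)"
        using P finC by (auto dest: finite_subset)
      then have "(\<Prod>c\<in>C. sentry_wt u p (super_tab C cf T P c))
          = (\<Prod>c\<in>P. sentry_wt u p (super_tab C cf T P c))
            * (\<Prod>c\<in>C - P. sentry_wt u p (super_tab C cf T P c))"
        by (metis prod.union_disjoint)
      also have "\<dots> = (\<Prod>c\<in>P. f1 c) * (\<Prod>c\<in>C - P. f2 c)"
        using P by (intro arg_cong2[where f="(*)"] prod.cong refl)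
          (auto simp: super_tab_def sentry_wt_def f1_def f2_def case_prod_unfold)
      finally show ?thesis .
    qed
    then have "(\<Sum>P\<in>Pow C. \<Prod>c\<in>C. sentry_wt u p (super_tab C cf T P c))
        = (\<Sum>P\<in>Pow C. (\<Prod>c\<in>P. f1 c) * (\<Prod>c\<in>C - P. f2 c))"
      by (rule sum.cong[OF refl])
    also have "\<dots> = (\<Prod>c\<in>C. f1 c + f2 c)" by (rule prod_add[OF finC, symmetric])
    finally show "(\<Sum>P\<in>Pow C. \<Prod>c\<in>C. sentry_wt u p (super_tab C cf T P c))
        = (\<Prod>c\<in>C. u (T c) + p (T c + cf (fst c) (snd c)))"
      by (simp add: f1_def f2_def add.commute)
  qed
  finally show ?thesis .
qed

definition g_entry :: "nat \<Rightarrow> sentry \<Rightarrow> gentry" where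
  "g_entry m e = (case e of
         Unp t \<Rightarrow> (if 1 \<le> t \<and> t \<le> int m then Plain t
                   else if t > int m then Circ (t - int m) else Bul (t - 1))
       | Pr t \<Rightarrow> (if t > int m then Bul (t - int m) else Circ (t - 1)))"

lemma to_g_eq_g_entry: "to_g m C S = (\<lambda>c. if c \<in> C then g_entry m (S c) else Plain 0)"
  unfolding to_g_def g_entry_def by simp

definition admissible :: "nat \<Rightarrow> sentry \<Rightarrow> bool" where
  "admissible m e \<longleftrightarrow> (\<forall>t. e = Pr t \<longrightarrow> \<not> (1 \<le> t \<and> t \<le> int m))"

lemma g_entry_inj:
  "admissible m e1 \<Longrightarrow> admissible m e2 \<Longrightarrow> g_entry m e1 = g_entry m e2 \<Longrightarrow> e1 = e2"
  unfolding admissible_def g_entry_def by (cases e1; cases e2) (auto split: if_splits)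

abbreviation g_sentry_wt ::
    "nat \<Rightarrow> (nat \<Rightarrow> 'a::comm_ring_1) \<Rightarrow> (nat \<Rightarrow> 'a) \<Rightarrow> (nat \<Rightarrow> 'a) \<Rightarrow> sentry \<Rightarrow> 'a" where
  "g_sentry_wt m x \<alpha> \<beta> \<equiv> sentry_wt (gy m x \<alpha> \<beta>) (\<lambda>t. - gz m \<alpha> \<beta> t)"

lemma gwt_g_entry: "admissible m e \<Longrightarrow> gwt x \<alpha> \<beta> (g_entry m e) = g_sentry_wt m x \<alpha> \<beta> e"
  unfolding admissible_def g_entry_def gwt_def sentry_wt_def gy_def gz_def
  by (cases e) (auto simp: nat_diff_distrib)

text \<open>A primed entry \<open>t'\<close> with \<open>t \<in> [m]\<close> has weight \<open>-z\<^sub>t = 0\<close> under the \<open>g\<close>-specialization.\<close>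
lemma g_sentry_wt_not_admissible: "\<not> admissible m e \<Longrightarrow> g_sentry_wt m x \<alpha> \<beta> e = 0"
  unfolding admissible_def sentry_wt_def gz_def by auto

lemma inj_on_to_g:
  "inj_on (to_g m C) {S\<in>super_tabs C cf a b. \<forall>c t. S c = Pr t \<longrightarrow> \<not> (1 \<le> t \<and> t \<le> int m)}"
proof (rule inj_onI)
  fix S1 S2
  assume S: "S1 \<in> {S\<in>super_tabs C cf a b. \<forall>c t. S c = Pr t \<longrightarrow> \<not> (1 \<le> t \<and> t \<le> int m)}"
    "S2 \<in> {S\<in>super_tabs C cf a b. \<forall>c t. S c = Pr t \<longrightarrow> \<not> (1 \<le> t \<and> t \<le> int m)}"
    and eq: "to_g m C S1 = to_g m C S2"
  show "S1 = S2"
  proof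
    fix c show "S1 c = S2 c"
    proof (cases "c \<in> C")
      case True
      then have "g_entry m (S1 c) = g_entry m (S2 c)"
        using fun_cong[OF eq, of c] by (simp add: to_g_eq_g_entry)
      moreover have "admissible m (S1 c)" "admissible m (S2 c)"
        using S unfolding admissible_def by blast+
      ultimately show ?thesis using g_entry_inj by blast
    next
      case False
      then show ?thesis using S super_tabs_outside by (metis (no_types, lifting) mem_Collect_eq)
    qed
  qed
qed

lemma sum_g_tabs_eq_sum_super_tabs:
  fixes x \<alpha> \<beta> :: "nat \<Rightarrow> 'a::comm_ring_1"
  assumes finC: "finite C"
  shows "(\<Sum>T\<in>g_tabs m C cf a b. tab_wt C x \<alpha> \<beta> T)
       = (\<Sum>S\<in>super_tabs C cf a b. \<Prod>c\<in>C. g_sentry_wt m x \<alpha> \<beta> (S c))"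
proof -
  define SP where "SP = {S\<in>super_tabs C cf a b. \<forall>c t. S c = Pr t \<longrightarrow> \<not> (1 \<le> t \<and> t \<le> int m)}"
  have ok: "admissible m (S c)" if "S \<in> SP" for S c
    using that unfolding SP_def admissible_def by blast
  have inj: "inj_on (to_g m C) SP"
    unfolding SP_def by (rule inj_on_to_g)
  have "(\<Sum>T\<in>g_tabs m C cf a b. tab_wt C x \<alpha> \<beta> T) = (\<Sum>S\<in>SP. tab_wt C x \<alpha> \<beta> (to_g m C S))"
    unfolding g_tabs_def SP_def[symmetric] by (rule sum.reindex[OF inj, unfolded comp_def])
  also have "\<dots> = (\<Sum>S\<in>SP. \<Prod>c\<in>C. g_sentry_wt m x \<alpha> \<beta> (S c))"
    unfolding tab_wt_def
    by (intro sum.cong refl prod.cong) (auto simp: to_g_eq_g_entry gwt_g_entry ok)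
  also have "\<dots> = (\<Sum>S\<in>super_tabs C cf a b. \<Prod>c\<in>C. g_sentry_wt m x \<alpha> \<beta> (S c))"
  proof (rule sum.mono_neutral_left[OF finite_super_tabs[OF finC]])
    show "SP \<subseteq> super_tabs C cf a b" by (auto simp: SP_def)
    show "\<forall>S\<in>super_tabs C cf a b - SP. (\<Prod>c\<in>C. g_sentry_wt m x \<alpha> \<beta> (S c)) = 0"
    proof
      fix S assume S: "S \<in> super_tabs C cf a b - SP"
      then obtain c t where bad: "S c = Pr t" "1 \<le> t" "t \<le> int m" unfolding SP_def by blast
      then have "c \<in> C" using S super_tabs_outside by fastforce
      moreover have "g_sentry_wt m x \<alpha> \<beta> (S c) = 0"
        using bad by (intro g_sentry_wt_not_admissible) (auto simp: admissible_def)
      ultimately show "(\<Prod>c\<in>C. g_sentry_wt m x \<alpha> \<beta> (S c)) = 0" by (intro prod_zero[OF finC]) blast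
    qed
  qed
  finally show ?thesis .
qed

section \<open>Flagged tableaux as nonmeeting families of paths\<close>

lemma card_less_ge:
  fixes f :: "nat \<Rightarrow> int"
  assumes s: "strict_mono_on {M<..L} f" and p: "M < p" "p \<le> L" and fp: "f p < v"
  shows "p - M \<le> card {r\<in>{M<..L}. f r < v}"
proof -
  have "{M<..p} \<subseteq> {r\<in>{M<..L}. f r < v}"
  proof
    fix r assume r: "r \<in> {M<..p}"
    then have "f r \<le> f p" using s p by (auto intro: strict_mono_on_leD)
    then show "r \<in> {r\<in>{M<..L}. f r < v}" using r p fp by auto
  qed
  then have "card {M<..p} \<le> card {r\<in>{M<..L}. f r < v}" by (intro card_mono) auto
  then show ?thesis by simp
qed

lemma card_less_le_if_pointwise_le:
  fixes f g :: "nat \<Rightarrow> int"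
  assumes sf: "strict_mono_on {M1<..L1} f" and M: "M2 \<le> M1" and L: "L2 \<le> L1"
    and le: "\<And>r. M1 < r \<Longrightarrow> r \<le> L2 \<Longrightarrow> f r \<le> g r"
  shows "card {r\<in>{M2<..L2}. g r < v} \<le> card {r\<in>{M1<..L1}. f r < v} + (M1 - M2)"
proof -
  define q where "q = card {r\<in>{M1<..L1}. f r < v}"
  have "{r\<in>{M2<..L2}. g r < v} \<subseteq> {M2<..M1 + q}"
  proof
    fix r assume r: "r \<in> {r\<in>{M2<..L2}. g r < v}"
    show "r \<in> {M2<..M1 + q}"
    proof (rule ccontr)
      assume "r \<notin> {M2<..M1 + q}"
      then have r1: "M1 + q < r" using r by auto
      then have "f r < v" using le[of r] r by auto
      then have "r - M1 \<le> q" unfolding q_def using card_less_ge[OF sf, of r v] r r1 L by auto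
      then show False using r1 by simp
    qed
  qed
  then have "card {r\<in>{M2<..L2}. g r < v} \<le> card {M2<..M1 + q}" by (intro card_mono) auto
  then show ?thesis using M by (simp add: q_def)
qed

lemma pointwise_le_iff_card_less:
  fixes f g :: "nat \<Rightarrow> int"
  assumes sf: "strict_mono_on {M1<..L1} f" and sg: "strict_mono_on {M2<..L2} g"
    and M: "M2 \<le> M1" and L: "L2 \<le> L1"
  shows "(\<forall>r. M1 < r \<and> r \<le> L2 \<longrightarrow> f r \<le> g r) \<longleftrightarrow>
         (\<forall>v. card {r\<in>{M2<..L2}. g r < v} \<le> card {r\<in>{M1<..L1}. f r < v} + (M1 - M2))"
proof
  assume "\<forall>r. M1 < r \<and> r \<le> L2 \<longrightarrow> f r \<le> g r"
  then show "\<forall>v. card {r\<in>{M2<..L2}. g r < v} \<le> card {r\<in>{M1<..L1}. f r < v} + (M1 - M2)"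
    using card_less_le_if_pointwise_le[OF sf M L] by blast
next
  assume C: "\<forall>v. card {r\<in>{M2<..L2}. g r < v} \<le> card {r\<in>{M1<..L1}. f r < v} + (M1 - M2)"
  show "\<forall>r. M1 < r \<and> r \<le> L2 \<longrightarrow> f r \<le> g r"
  proof (intro allI impI, rule ccontr)
    fix r assume r: "M1 < r \<and> r \<le> L2" and nle: "\<not> f r \<le> g r"
    have "{r'\<in>{M1<..L1}. f r' < f r} = {M1<..<r}"
    proof (intro equalityI subsetI)
      fix r' assume "r' \<in> {r'\<in>{M1<..L1}. f r' < f r}"
      then show "r' \<in> {M1<..<r}" using strict_mono_on_less[OF sf, of r' r] r L by auto
    next
      fix r' assume "r' \<in> {M1<..<r}"
      then show "r' \<in> {r'\<in>{M1<..L1}. f r' < f r}" using strict_mono_on_less[OF sf, of r' r] r L by auto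
    qed
    then have c1: "card {r'\<in>{M1<..L1}. f r' < f r} = r - M1 - 1" by simp
    have c2: "r - M2 \<le> card {r'\<in>{M2<..L2}. g r' < f r}"
      using card_less_ge[OF sg, of r "f r"] r M nle by auto
    show False using C[rule_format, of "f r"] c1 c2 r M by linarith
  qed
qed

definition enum :: "int set \<Rightarrow> nat \<Rightarrow> int" where
  "enum X p = sorted_list_of_set X ! p"

lemma enum_mono:
  assumes "finite X" "p < q" "q < card X"
  shows "enum X p < enum X q"
  unfolding enum_def using assms
  by (intro sorted_wrt_nth_less[where P="(<)"]) (auto simp: strict_sorted_list_of_set)

lemma enum_in:
  assumes "finite X" "p < card X"
  shows "enum X p \<in> X"
  unfolding enum_def using assms by (metis length_sorted_list_of_set nth_mem set_sorted_list_of_set)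

lemma enum_image:
  assumes "finite X"
  shows "enum X ` {..<card X} = X"
proof (intro equalityI subsetI)
  fix s assume "s \<in> enum X ` {..<card X}" then show "s \<in> X" using enum_in assms by auto
next
  fix s assume "s \<in> X" then have "s \<in> set (sorted_list_of_set X)" using assms by simp
  then obtain p where "p < length (sorted_list_of_set X)" "sorted_list_of_set X ! p = s"
    by (metis in_set_conv_nth)
  then show "s \<in> enum X ` {..<card X}" by (auto simp: enum_def)
qed

lemma enum_of_image:
  assumes s: "\<And>p q. p < q \<Longrightarrow> q < k \<Longrightarrow> f p < (f q :: int)" and p: "p < k"
  shows "enum (f ` {..<k}) p = f p"
proof -
  have inj: "inj_on f {..<k}"
    by (rule inj_onI) (metis lessThan_iff linorder_neqE_nat s order_less_irrefl)
  have sw: "sorted_wrt (<) (map f [0..<k])"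
    unfolding sorted_wrt_iff_nth_less by (auto intro: s)
  have "sorted_list_of_set (f ` {..<k}) = map f [0..<k]"
    using sw inj by (subst sorted_list_of_set_unique[symmetric]) (auto simp: card_image)
  then show ?thesis using p unfolding enum_def by simp
qed

text \<open>Column \<open>i + 1\<close> of the diagram (columns are indexed from \<open>0\<close> here) consists of the rows
  \<open>M i < r \<le> L i\<close>; cell \<open>(r, j)\<close> has content \<open>j - r + K\<close>, and \<open>ctop i\<close>, \<open>cbot i\<close> are the contents of
  the top and bottom cell of column \<open>i + 1\<close>.\<close>
locale column_shape =
  fixes n :: nat and M L :: "nat \<Rightarrow> nat" and K :: int and a b :: "nat \<Rightarrow> int"
    and \<phi> :: "int \<Rightarrow> int \<Rightarrow> 'a::comm_ring_1"
  assumes M_le_L: "\<And>i. M i \<le> L i"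
    and M_antimono: "\<And>i. M (Suc i) \<le> M i" and L_antimono: "\<And>i. L (Suc i) \<le> L i"

begin

definition cells :: "(nat \<times> nat) set" where
  "cells = {(r, Suc i) | r i. i < n \<and> M i < r \<and> r \<le> L i}"

definition ctop :: "nat \<Rightarrow> int" where "ctop i = int (Suc i) - int (M i) - 1 + K"

definition cbot :: "nat \<Rightarrow> int" where "cbot i = int (Suc i) - int (L i) + K"

definition a0 :: "nat \<Rightarrow> int" where "a0 i = a (Suc i)"

definition b0 :: "nat \<Rightarrow> int" where "b0 i = b (Suc i)"

definition col_set :: "(nat \<times> nat \<Rightarrow> int) \<Rightarrow> nat \<Rightarrow> int set" where
  "col_set T i = (\<lambda>r. T (r, Suc i)) ` {M i<..L i}"

definition nonmeeting_cols :: "(nat \<Rightarrow> int set) set" where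
  "nonmeeting_cols = {S \<in> PiE {0..<n} (\<lambda>i. ksubsets (a0 i) (b0 i) (ctop i - cbot i + 1)).
     \<forall>i v. Suc i < n \<longrightarrow>
       ctop i - int (count_below (S i) v) < ctop (Suc i) - int (count_below (S (Suc i)) v)}"

definition cols_of :: "(nat \<times> nat \<Rightarrow> int) \<Rightarrow> nat \<Rightarrow> int set" where
  "cols_of T = restrict (col_set T) {0..<n}"

definition tab_of :: "(nat \<Rightarrow> int set) \<Rightarrow> nat \<times> nat \<Rightarrow> int" where
  "tab_of S = (\<lambda>(r, col). if (r, col) \<in> cells then enum (S (col - 1)) (r - M (col - 1) - 1) else 0)"

lemma cells_iff: "(r, Suc i) \<in> cells \<longleftrightarrow> i < n \<and> M i < r \<and> r \<le> L i"
  unfolding cells_def by auto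

lemma cellsE: "c \<in> cells \<Longrightarrow> (\<And>r i. c = (r, Suc i) \<Longrightarrow> i < n \<Longrightarrow> M i < r \<Longrightarrow> r \<le> L i \<Longrightarrow> P) \<Longrightarrow> P"
  unfolding cells_def by auto

lemma col_strict_mono_on:
  assumes T: "flagged_ssyt cells a b T" and i: "i < n"
  shows "strict_mono_on {M i<..L i} (\<lambda>r. T (r, Suc i))"
proof (rule strict_mono_onI)
  fix p q assume "p \<in> {M i<..L i}" "q \<in> {M i<..L i}" "p < q"
  then have pq: "M i < p" "p < q" "q \<le> L i" by auto
  then show "T (p, Suc i) < T (q, Suc i)"
  proof (induction q)
    case 0 then show ?case by simp
  next
    case (Suc q)
    have step: "T (q, Suc i) < T (Suc q, Suc i)"
      using T Suc.prems i unfolding flagged_ssyt_def by (auto simp: cells_iff)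
    show ?case
    proof (cases "p = q")
      case True then show ?thesis using step by simp
    next
      case False then show ?thesis using Suc step by simp
    qed
  qed
qed

lemma count_below_col_set:
  assumes s: "strict_mono_on {M i<..L i} (\<lambda>r. T (r, Suc i))"
  shows "count_below (col_set T i) v = card {r\<in>{M i<..L i}. T (r, Suc i) < v}"
proof -
  have inj: "inj_on (\<lambda>r. T (r, Suc i)) {M i<..L i}"
    using s by (rule strict_mono_on_imp_inj_on)
  have "{t \<in> col_set T i. t < v} = (\<lambda>r. T (r, Suc i)) ` {r\<in>{M i<..L i}. T (r, Suc i) < v}"
    unfolding col_set_def by auto
  moreover have "inj_on (\<lambda>r. T (r, Suc i)) {r\<in>{M i<..L i}. T (r, Suc i) < v}"
    using inj by (rule inj_on_subset) auto
  ultimately show ?thesis unfolding count_below_def by (simp add: card_image)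
qed

lemma card_col_set:
  assumes s: "strict_mono_on {M i<..L i} (\<lambda>r. T (r, Suc i))"
  shows "card (col_set T i) = L i - M i"
proof -
  have inj: "inj_on (\<lambda>r. T (r, Suc i)) {M i<..L i}"
    using s by (rule strict_mono_on_imp_inj_on)
  then show ?thesis unfolding col_set_def by (simp add: card_image)
qed

lemma col_set_ksubsets:
  assumes T: "flagged_ssyt cells a b T" and i: "i < n"
  shows "col_set T i \<in> ksubsets (a0 i) (b0 i) (ctop i - cbot i + 1)"
proof -
  have "col_set T i \<subseteq> {a0 i..b0 i}"
    using T i unfolding col_set_def flagged_ssyt_def a0_def b0_def by (force simp: cells_iff)
  moreover have "int (card (col_set T i)) = ctop i - cbot i + 1"
    using card_col_set[OF col_strict_mono_on[OF T i]] M_le_L[of i]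
      by (simp add: ctop_def cbot_def of_nat_diff)
  ultimately show ?thesis by (simp add: ksubsets_def)
qed

lemma row_weak_iff_heights_less:
  assumes T: "\<And>i. i < n \<Longrightarrow> strict_mono_on {M i<..L i} (\<lambda>r. T (r, Suc i))" and i: "Suc i < n"
  shows "(\<forall>r. (r, Suc i) \<in> cells \<and> (r, Suc (Suc i)) \<in> cells \<longrightarrow> T (r, Suc i) \<le> T (r, Suc (Suc i)))
     \<longleftrightarrow> (\<forall>v. ctop i - int (count_below (col_set T i) v)
       < ctop (Suc i) - int (count_below (col_set T (Suc i)) v))"
proof -
  have s1: "strict_mono_on {M i<..L i} (\<lambda>r. T (r, Suc i))"
    and s2: "strict_mono_on {M (Suc i)<..L (Suc i)} (\<lambda>r. T (r, Suc (Suc i)))"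
    using T i by auto
  have lhs: "(\<forall>r. (r, Suc i) \<in> cells \<and> (r, Suc (Suc i)) \<in> cells \<longrightarrow> T (r, Suc i) \<le> T (r, Suc (Suc i)))
      \<longleftrightarrow> (\<forall>r. M i < r \<and> r \<le> L (Suc i) \<longrightarrow> T (r, Suc i) \<le> T (r, Suc (Suc i)))"
    using i M_antimono[of i] L_antimono[of i] by (auto simp: cells_iff)
  have rhs: "(\<forall>v. ctop i - int (count_below (col_set T i) v)
    < ctop (Suc i) - int (count_below (col_set T (Suc i)) v))
      \<longleftrightarrow> (\<forall>v. card {r\<in>{M (Suc i)<..L (Suc i)}. T (r, Suc (Suc i)) < v}
        \<le> card {r\<in>{M i<..L i}. T (r, Suc i) < v} + (M i - M (Suc i)))"
  proof -
    have "int (Suc i) - int (M i) - 1 + K - int B < int (Suc (Suc i)) - int (M (Suc i)) - 1 + K - int A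
        \<longleftrightarrow> A \<le> B + (M i - M (Suc i))" for A B
      using M_antimono[of i] by linarith
    then show ?thesis
      unfolding count_below_col_set[OF s1] count_below_col_set[OF s2] ctop_def by presburger
  qed
  show ?thesis unfolding lhs rhs by (rule pointwise_le_iff_card_less[OF s1 s2 M_antimono L_antimono])
qed

lemma shift_image: "(\<lambda>r. r - mm - 1) ` {mm<..ll} = {..<ll - (mm::nat)}"
proof (intro equalityI subsetI)
  fix p assume "p \<in> (\<lambda>r. r - mm - 1) ` {mm<..ll}" then show "p \<in> {..<ll - mm}" by auto
next
  fix p assume "p \<in> {..<ll - mm}"
  then have "p + mm + 1 \<in> {mm<..ll}" "p = (p + mm + 1) - mm - 1" by auto
  then show "p \<in> (\<lambda>r. r - mm - 1) ` {mm<..ll}" by blast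
qed

lemma shift_image2: "(\<lambda>p. mm + 1 + p) ` {..<ll - mm} = {mm<..(ll::nat)}" if "mm \<le> ll"
proof (intro equalityI subsetI)
  fix r assume "r \<in> (\<lambda>p. mm + 1 + p) ` {..<ll - mm}" then show "r \<in> {mm<..ll}" by auto
next
  fix r assume "r \<in> {mm<..ll}"
  then have "r - mm - 1 \<in> {..<ll - mm}" "r = mm + 1 + (r - mm - 1)" by auto
  then show "r \<in> (\<lambda>p. mm + 1 + p) ` {..<ll - mm}" by blast
qed

lemma prod_cells_eq_prod_path_weight:
  assumes T: "flagged_ssyt cells a b T"
  shows "(\<Prod>c\<in>cells. \<phi> (T c) (int (snd c) - int (fst c) + K))
    = (\<Prod>i=0..<n. path_weight \<phi> (ctop i) (col_set T i))"
proof -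
  have cells_eq: "cells = (\<lambda>(i, r). (r, Suc i)) ` (SIGMA i:{0..<n}. {M i<..L i})"
    unfolding cells_def by auto
  have inj: "inj_on (\<lambda>(i, r). (r, Suc i)) (SIGMA i:{0..<n}. {M i<..L i})"
    by (auto simp: inj_on_def)
  have "(\<Prod>c\<in>cells. \<phi> (T c) (int (snd c) - int (fst c) + K))
      = (\<Prod>ir\<in>(SIGMA i:{0..<n}. {M i<..L i}). \<phi> (T (snd ir, Suc (fst ir))) (int (Suc (fst ir))
        - int (snd ir) + K))"
    unfolding cells_eq by (subst prod.reindex[OF inj]) (simp add: case_prod_unfold)
  also have "\<dots> = (\<Prod>i=0..<n. \<Prod>r\<in>{M i<..L i}. \<phi> (T (r, Suc i)) (int (Suc i) - int r + K))"
    by (subst prod.Sigma) (auto simp: case_prod_unfold)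
  also have "\<dots> = (\<Prod>i=0..<n. path_weight \<phi> (ctop i) (col_set T i))"
  proof (intro prod.cong refl)
    fix i assume i: "i \<in> {0..<n}"
    have s: "strict_mono_on {M i<..L i} (\<lambda>r. T (r, Suc i))" using col_strict_mono_on[OF T] i by auto
    have injc: "inj_on (\<lambda>r. T (r, Suc i)) {M i<..L i}"
      using s by (rule strict_mono_on_imp_inj_on)
    have nc: "int (count_below (col_set T i) (T (r, Suc i)))
      = int r - int (M i) - 1" if r: "r \<in> {M i<..L i}" for r
    proof -
      have "{r'\<in>{M i<..L i}. T (r', Suc i) < T (r, Suc i)} = {M i<..<r}"
        using strict_mono_on_less[OF s] r by auto
      then show ?thesis unfolding count_below_col_set[OF s] using r by auto
    qed
    have "path_weight \<phi> (ctop i) (col_set T i)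
      = (\<Prod>r\<in>{M i<..L i}. \<phi> (T (r, Suc i)) (ctop i - int (count_below (col_set T i) (T (r, Suc i)))))"
      unfolding path_weight_def col_set_def by (subst prod.reindex[OF injc]) (simp add: col_set_def)
    also have "\<dots> = (\<Prod>r\<in>{M i<..L i}. \<phi> (T (r, Suc i)) (int (Suc i) - int r + K))"
      by (intro prod.cong refl) (simp add: nc ctop_def algebra_simps)
    finally show "(\<Prod>r\<in>{M i<..L i}. \<phi> (T (r, Suc i)) (int (Suc i) - int r + K))
      = path_weight \<phi> (ctop i) (col_set T i)" ..
  qed
  finally show ?thesis .
qed

lemma cols_of_nonmeeting:
  assumes T: "T \<in> ssyt cells a b"
  shows "cols_of T \<in> nonmeeting_cols"
proof -
  have F: "flagged_ssyt cells a b T" using T by (simp add: ssyt_def)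
  have s: "\<And>i. i < n \<Longrightarrow> strict_mono_on {M i<..L i} (\<lambda>r. T (r, Suc i))" using col_strict_mono_on[OF F]
    by auto
  have "cols_of T \<in> PiE {0..<n} (\<lambda>i. ksubsets (a0 i) (b0 i) (ctop i - cbot i + 1))"
    unfolding cols_of_def using col_set_ksubsets[OF F] by auto
  moreover have "ctop i - int (count_below (cols_of T i) v)
    < ctop (Suc i) - int (count_below (cols_of T (Suc i)) v)" if i: "Suc i < n" for i v
  proof -
    have "\<forall>r. (r, Suc i) \<in> cells \<and> (r, Suc (Suc i)) \<in> cells \<longrightarrow> T (r, Suc i) \<le> T (r, Suc (Suc i))"
      using F unfolding flagged_ssyt_def by auto
    then show ?thesis using row_weak_iff_heights_less[OF s i] i by (simp add: cols_of_def)
  qed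
  ultimately show ?thesis unfolding nonmeeting_cols_def by auto
qed

lemma tab_of_col:
  assumes S: "S \<in> nonmeeting_cols" and i: "i < n"
  shows "strict_mono_on {M i<..L i} (\<lambda>r. tab_of S (r, Suc i))" and "col_set (tab_of S) i = S i"
    and "\<And>r. M i < r \<Longrightarrow> r \<le> L i \<Longrightarrow> tab_of S (r, Suc i) = enum (S i) (r - M i - 1)"
proof -
  have SP: "S i \<in> ksubsets (a0 i) (b0 i) (ctop i - cbot i + 1)" using S i
    by (auto simp: nonmeeting_cols_def)
  then have fin: "finite (S i)" and cardS: "card (S i) = L i - M i"
    using M_le_L[of i] by (auto simp: ksubsets_def ctop_def cbot_def dest: finite_subset)
  show bw: "\<And>r. M i < r \<Longrightarrow> r \<le> L i \<Longrightarrow> tab_of S (r, Suc i) = enum (S i) (r - M i - 1)"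
    using i by (simp add: tab_of_def cells_iff)
  show "strict_mono_on {M i<..L i} (\<lambda>r. tab_of S (r, Suc i))"
    using bw fin cardS by (auto intro!: strict_mono_onI enum_mono)
  have "col_set (tab_of S) i = (\<lambda>r. enum (S i) (r - M i - 1)) ` {M i<..L i}"
    unfolding col_set_def using bw by auto
  also have "\<dots> = enum (S i) ` {..<L i - M i}"
    by (subst shift_image[symmetric]) (simp add: image_image)
  also have "\<dots> = S i" using enum_image[OF fin] cardS by simp
  finally show "col_set (tab_of S) i = S i" .
qed

lemma tab_of_ssyt:
  assumes S: "S \<in> nonmeeting_cols"
  shows "tab_of S \<in> ssyt cells a b"
proof -
  have SP: "\<And>i. i < n \<Longrightarrow> S i \<in> ksubsets (a0 i) (b0 i) (ctop i - cbot i + 1)" using S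
    by (auto simp: nonmeeting_cols_def)
  have fl: "a j \<le> tab_of S (r, j) \<and> tab_of S (r, j) \<le> b j" if rj: "(r, j) \<in> cells" for r j
  proof -
    obtain i where ij: "j = Suc i" "i < n" "M i < r" "r \<le> L i" using rj by (auto elim!: cellsE)
    have fin: "finite (S i)" and cardS: "card (S i) = L i - M i" and sub: "S i \<subseteq> {a0 i..b0 i}"
      using SP[OF ij(2)] M_le_L[of i] by (auto simp: ksubsets_def ctop_def cbot_def dest: finite_subset)
    have "enum (S i) (r - M i - 1) \<in> S i" using ij fin cardS by (intro enum_in) auto
    then show ?thesis using tab_of_col(3)[OF S ij(2) ij(3,4)] sub ij by (auto simp: a0_def b0_def)
  qed
  have colstrict: "tab_of S (r, j) < tab_of S (r + 1, j)" if rj: "(r, j) \<in> cells" "(r + 1, j) \<in> cells"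
    for r j
  proof -
    obtain i where ij: "j = Suc i" "i < n" "M i < r" "r + 1 \<le> L i" using rj by (auto elim!: cellsE)
    show ?thesis using strict_mono_onD[OF tab_of_col(1)[OF S ij(2)]] ij by auto
  qed
  have row: "tab_of S (r, j) \<le> tab_of S (r, j + 1)" if rj: "(r, j) \<in> cells" "(r, j + 1) \<in> cells" for r j
  proof -
    obtain i where ij: "j = Suc i" "i < n" using rj by (auto elim!: cellsE)
    have i1: "Suc i < n" using rj ij by (auto simp: cells_iff)
    have s: "\<And>i. i < n \<Longrightarrow> strict_mono_on {M i<..L i} (\<lambda>r. tab_of S (r, Suc i))" using tab_of_col(1)[OF S]
      by auto
    have "\<forall>v. ctop i - int (count_below (col_set (tab_of S) i) v)
      < ctop (Suc i) - int (count_below (col_set (tab_of S) (Suc i)) v)"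
      using S i1 tab_of_col(2)[OF S] ij(2) by (auto simp: nonmeeting_cols_def)
    then show ?thesis using row_weak_iff_heights_less[OF s i1] rj ij by auto
  qed
  have "flagged_ssyt cells a b (tab_of S)" unfolding flagged_ssyt_def using fl colstrict row by auto
  moreover have "\<forall>c. c \<notin> cells \<longrightarrow> tab_of S c = 0" by (auto simp: tab_of_def)
  ultimately show ?thesis by (simp add: ssyt_def)
qed

lemma cols_of_tab_of: "S \<in> nonmeeting_cols \<Longrightarrow> cols_of (tab_of S) = S"
  unfolding cols_of_def using tab_of_col(2)
    by (auto simp: nonmeeting_cols_def PiE_def extensional_def restrict_def fun_eq_iff)

lemma tab_of_cols_of:
  assumes T: "T \<in> ssyt cells a b"
  shows "tab_of (cols_of T) = T"
proof
  fix c
  have F: "flagged_ssyt cells a b T" using T by (simp add: ssyt_def)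
  show "tab_of (cols_of T) c = T c"
  proof (cases "c \<in> cells")
    case False then show ?thesis using T by (cases c) (auto simp: tab_of_def ssyt_def)
  next
    case True
    then obtain r i where c: "c = (r, Suc i)" "i < n" "M i < r" "r \<le> L i" by (auto elim: cellsE)
    have s: "strict_mono_on {M i<..L i} (\<lambda>r. T (r, Suc i))" using col_strict_mono_on[OF F c(2)] .
    define f where "f p = T (M i + 1 + p, Suc i)" for p
    have sf: "\<And>p q. p < q \<Longrightarrow> q < L i - M i \<Longrightarrow> f p < f q"
      using strict_mono_onD[OF s] unfolding f_def by auto
    have "f ` {..<L i - M i} = (\<lambda>r. T (r, Suc i)) ` ((\<lambda>p. M i + 1 + p) ` {..<L i - M i})"
      by (simp add: f_def image_image)
    then have cs: "col_set T i = f ` {..<L i - M i}"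
      unfolding col_set_def shift_image2[OF M_le_L[of i]] by simp
    have "enum (col_set T i) (r - M i - 1) = f (r - M i - 1)"
      unfolding cs using c by (intro enum_of_image[OF sf]) auto
    also have "\<dots> = T c" using c by (simp add: f_def)
    finally show ?thesis using True c by (simp add: tab_of_def cols_of_def)
  qed
qed

theorem sum_ssyt_eq_sum_nonmeeting:
  "(\<Sum>T\<in>ssyt cells a b. \<Prod>c\<in>cells. \<phi> (T c) (int (snd c) - int (fst c) + K))
     = (\<Sum>S\<in>nonmeeting_cols. \<Prod>i=0..<n. path_weight \<phi> (ctop i) (S i))"
proof (rule sum.reindex_bij_witness[where j = cols_of and i = tab_of])
  fix T assume T: "T \<in> ssyt cells a b"
  show "tab_of (cols_of T) = T" using tab_of_cols_of[OF T] .
  show "cols_of T \<in> nonmeeting_cols" using cols_of_nonmeeting[OF T] .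
  have F: "flagged_ssyt cells a b T" using T by (simp add: ssyt_def)
  show "(\<Prod>i=0..<n. path_weight \<phi> (ctop i) (cols_of T i))
    = (\<Prod>c\<in>cells. \<phi> (T c) (int (snd c) - int (fst c) + K))"
    unfolding prod_cells_eq_prod_path_weight[OF F] by (intro prod.cong refl) (simp add: cols_of_def)
next
  fix S assume S: "S \<in> nonmeeting_cols"
  show "cols_of (tab_of S) = S" using cols_of_tab_of[OF S] .
  show "tab_of S \<in> ssyt cells a b" using tab_of_ssyt[OF S] .
qed

lemma lgv_shape_if_flags:
  assumes flags: "\<And>t. Suc t < n \<Longrightarrow> M t < L (Suc t) \<Longrightarrow>
      a (Suc t) - a (Suc (Suc t)) \<le> int (M t) - int (M (Suc t)) + 1 \<and>
      b (Suc t) - b (Suc (Suc t)) \<le> int (L t) - int (L (Suc t)) + 1"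
  shows "lgv_shape n ctop cbot a0 b0"
proof
  fix t assume t: "Suc t < n"
  show "ctop t < ctop (Suc t)" using M_antimono[of t] by (simp add: ctop_def)
  show "cbot t < cbot (Suc t)" using L_antimono[of t] by (simp add: cbot_def)
  assume "\<not> ctop t + 2 \<le> cbot (Suc t)"
  then have "M t < L (Suc t)" by (simp add: ctop_def cbot_def)
  then show "a0 t - a0 (Suc t) \<le> ctop (Suc t) - ctop t \<and> b0 t - b0 (Suc t) \<le> cbot (Suc t) - cbot t"
    using flags[OF t] by (simp add: ctop_def cbot_def a0_def b0_def)
qed

theorem det_paths_eq_sum_ssyt:
  assumes "lgv_shape n ctop cbot a0 b0"
  shows "det (mat n n (\<lambda>(i, j). \<Sum>S\<in>ksubsets (a0 j) (b0 i) (ctop j - cbot i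
    + 1). path_weight \<phi> (ctop j) S))
       = (\<Sum>T\<in>ssyt cells a b. \<Prod>c\<in>cells. \<phi> (T c) (int (snd c) - int (fst c) + K))"
proof -
  interpret lgv_shape n ctop cbot a0 b0 \<phi> by fact
  have "nonmeeting = nonmeeting_cols"
    unfolding nonmeeting_def nonmeeting_cols_def paths_def ..
  then show ?thesis
    using lgv_det sum_ssyt_eq_sum_nonmeeting unfolding paths_def by simp
qed

lemma Sdet_eq_det_paths:
  assumes M: "\<And>i. M i = conj mu (Suc i)" and L: "\<And>i. L i = conj la (Suc i)"
    and cf: "\<And>i j. cf i j = int j - int i + K"
  shows "Sdet cf la mu n a b y z = det (mat n n (\<lambda>(i, j).
           \<Sum>S\<in>ksubsets (a0 j) (b0 i) (ctop j - cbot i + 1). path_weight (\<lambda>s d. y s - z (s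
             + d)) (ctop j) S))"
proof -
  have entry: "esup (int (conj la (i + 1)) - int (i + 1) - int (conj mu (j + 1)) + int (j + 1))
        (alph y (a (j + 1)) (b (i + 1)))
        (alph z (a (j + 1) + cf (conj mu (j + 1) + 1) (j + 1)) (b (i + 1) + cf (conj la (i + 1)) (i
          + 1)))
      = (\<Sum>S\<in>ksubsets (a0 j) (b0 i) (ctop j - cbot i + 1). path_weight (\<lambda>s d. y s - z (s
        + d)) (ctop j) S)"
    for i j
  proof -
    have "int (conj la (i + 1)) - int (i + 1) - int (conj mu (j + 1)) + int (j + 1)
      = ctop j - cbot i + 1"
      "a (j + 1) + cf (conj mu (j + 1) + 1) (j + 1) = a0 j + ctop j"
      "b (i + 1) + cf (conj la (i + 1)) (i + 1) = b0 i + ctop j - (ctop j - cbot i + 1) + 1"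
      "a (j + 1) = a0 j" "b (i + 1) = b0 i"
      by (simp_all add: ctop_def cbot_def a0_def b0_def M L cf)
    then show ?thesis by (simp only: esup_alph_eq_sum_path_weight)
  qed
  show ?thesis
    unfolding Sdet_def Let_def entry ..
qed

lemma finite_cells: "finite cells"
proof -
  have "cells = (\<lambda>(i, r). (r, Suc i)) ` (SIGMA i:{0..<n}. {M i<..L i})" unfolding cells_def by auto
  then show ?thesis by auto
qed

end

section \<open>Partitions\<close>

lemma conj_card: "conj la j = card {k. k < length la \<and> j \<le> la ! k}"
  unfolding conj_def by (rule length_filter_conv_card)

lemma conj_antimono: "j \<le> j' \<Longrightarrow> conj la j' \<le> conj la j"
  unfolding conj_card by (intro card_mono) auto

lemma partition_nth_antimono:
  assumes "is_partition la" "k \<le> k'" "k' < length la"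
  shows "la ! k' \<le> la ! k"
proof (cases "k = k'")
  case True then show ?thesis by simp
next
  case False
  then show ?thesis using assms unfolding is_partition_def
    by (metis le_neq_implies_less sorted_wrt_nth_less)
qed

lemma le_part_iff_le_conj:
  assumes P: "is_partition la" and r: "1 \<le> r" and c: "1 \<le> c"
  shows "c \<le> part la r \<longleftrightarrow> r \<le> conj la c"
proof
  assume h: "c \<le> part la r"
  then have rl: "r \<le> length la" and pr: "part la r = la ! (r - 1)" using c r
    by (auto simp: part_def split: if_splits)
  have "{0..<r} \<subseteq> {k. k < length la \<and> c \<le> la ! k}"
  proof
    fix k assume "k \<in> {0..<r}"
    then have "k \<le> r - 1" "k < length la" using rl by auto
    then have "la ! (r - 1) \<le> la ! k" using partition_nth_antimono[OF P, of k "r - 1"] rl r by auto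
    then show "k \<in> {k. k < length la \<and> c \<le> la ! k}" using h pr \<open>k < length la\<close> by auto
  qed
  then have "card {0..<r} \<le> conj la c" unfolding conj_card by (intro card_mono) auto
  then show "r \<le> conj la c" by simp
next
  assume h: "r \<le> conj la c"
  show "c \<le> part la r"
  proof (rule ccontr)
    assume nc: "\<not> c \<le> part la r"
    have "{k. k < length la \<and> c \<le> la ! k} \<subseteq> {..<r - 1}"
    proof
      fix k assume k: "k \<in> {k. k < length la \<and> c \<le> la ! k}"
      show "k \<in> {..<r - 1}"
      proof (rule ccontr)
        assume "k \<notin> {..<r - 1}"
        then have "r - 1 \<le> k" by simp
        then have "r \<le> length la" using k r by auto
        then have "part la r = la ! (r - 1)" using r by (simp add: part_def)
        moreover have "la ! k \<le> la ! (r - 1)" using partition_nth_antimono[OF P \<open>r - 1 \<le> k\<close>] k by auto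
        ultimately show False using nc k by auto
      qed
    qed
    then have "conj la c \<le> card {..<r - 1}" unfolding conj_card by (intro card_mono) auto
    then show False using h r by simp
  qed
qed

lemma part_le_part_1:
  assumes P: "is_partition la" and r: "1 \<le> r"
  shows "part la r \<le> part la 1"
proof (cases "r \<le> length la")
  case True
  then show ?thesis using partition_nth_antimono[OF P, of 0 "r - 1"] r by (auto simp: part_def)
next
  case False then show ?thesis by (simp add: part_def)
qed

lemma conj_mono_subpart:
  assumes P: "is_partition la" and Q: "is_partition mu" and S: "subpart mu la" and j: "1 \<le> j"
  shows "conj mu j \<le> conj la j"
proof (cases "conj mu j = 0")
  case True then show ?thesis by simp
next
  case False
  then have "j \<le> part mu (conj mu j)" using le_part_iff_le_conj[OF Q, of "conj mu j" j] j by simp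
  also have "\<dots> \<le> part la (conj mu j)" using S by (simp add: subpart_def)
  finally show ?thesis using le_part_iff_le_conj[OF P, of "conj mu j" j] j False by simp
qed

lemma column_shape_conj:
  assumes P: "is_partition la" and Q: "is_partition mu" and S: "subpart mu la"
  shows "column_shape (\<lambda>i. conj mu (Suc i)) (\<lambda>i. conj la (Suc i))"
  by (rule column_shape.intro) (auto intro: conj_mono_subpart[OF P Q S] conj_antimono)

lemma skew_cells_eq_cells:
  assumes P: "is_partition la" and Q: "is_partition mu" and S: "subpart mu la" and n: "part la 1 \<le> n"
  shows "skew_cells la mu = column_shape.cells n (\<lambda>i. conj mu (Suc i)) (\<lambda>i. conj la (Suc i))"
proof (intro equalityI subsetI)
  fix c assume c: "c \<in> skew_cells la mu"
  obtain r col where rc: "c = (r, col)" by (cases c)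
  have h: "1 \<le> r" "1 \<le> col" "part mu r < col" "col \<le> part la r" using c rc
    by (auto simp: skew_cells_def)
  obtain i where i: "col = Suc i" using h(2) by (cases col) auto
  have "col \<le> n" using h part_le_part_1[OF P h(1)] n by simp
  moreover have "conj mu col < r" using le_part_iff_le_conj[OF Q h(1) h(2)] h(3) by simp
  moreover have "r \<le> conj la col" using le_part_iff_le_conj[OF P h(1) h(2)] h(4) by simp
  ultimately show "c \<in> column_shape.cells n (\<lambda>i. conj mu (Suc i)) (\<lambda>i. conj la (Suc i))"
    unfolding column_shape.cells_def[OF column_shape_conj[OF P Q S]] rc i by auto
next
  fix c assume "c \<in> column_shape.cells n (\<lambda>i. conj mu (Suc i)) (\<lambda>i. conj la (Suc i))"
  then obtain r i where c: "c = (r, Suc i)" "i < n" "conj mu (Suc i) < r" "r \<le> conj la (Suc i)"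
    unfolding column_shape.cells_def[OF column_shape_conj[OF P Q S]] by auto
  have r: "1 \<le> r" using c by simp
  have "part mu r < Suc i" using le_part_iff_le_conj[OF Q r, of "Suc i"] c by simp
  moreover have "Suc i \<le> part la r" using le_part_iff_le_conj[OF P r, of "Suc i"] c by simp
  ultimately show "c \<in> skew_cells la mu" using c r by (simp add: skew_cells_def)
qed

theorem g_flagged_tableau_formula:
  fixes x \<alpha> \<beta> :: "nat \<Rightarrow> 'a::comm_ring_1"
  assumes P: "is_partition la" and Q: "is_partition mu" and S: "subpart mu la"
    and n: "part la 1 \<le> n" and F: "column_flags la mu n a b"
  shows "gflag (rcont r la) la mu n a b m x \<alpha> \<beta> =
     (\<Sum>T\<in>g_tabs m (skew_cells la mu) (rcont r la) a b. tab_wt (skew_cells la mu) x \<alpha> \<beta> T)"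
proof -
  define M where "M i = conj mu (Suc i)" for i
  define L where "L i = conj la (Suc i)" for i
  define K where "K = r - 1 + int (conj la 1)"
  define y where "y = gy m x \<alpha> \<beta>"
  define z where "z = gz m \<alpha> \<beta>"
  interpret T: column_shape n M L K a b "\<lambda>s d. y s - z (s + d)"
    using column_shape_conj[OF P Q S] unfolding M_def L_def .
  have rc: "rcont r la i j = int j - int i + K" for i j by (simp add: rcont_def K_def)
  have shape: "lgv_shape n T.ctop T.cbot T.a0 T.b0"
  proof (rule T.lgv_shape_if_flags)
    fix t assume "Suc t < n" "M t < L (Suc t)"
    then show "a (Suc t) - a (Suc (Suc t)) \<le> int (M t) - int (M (Suc t)) + 1 \<and>
        b (Suc t) - b (Suc (Suc t)) \<le> int (L t) - int (L (Suc t)) + 1"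
      using F unfolding column_flags_def M_def L_def by (auto dest!: spec[of _ "Suc t"])
  qed
  have "gflag (rcont r la) la mu n a b m x \<alpha> \<beta> =
      (\<Sum>T\<in>ssyt T.cells a b. \<Prod>c\<in>T.cells. y (T c) - z (T c + (int (snd c) - int (fst c) + K)))"
    unfolding gflag_def y_def[symmetric] z_def[symmetric]
      T.Sdet_eq_det_paths[OF M_def L_def rc] T.det_paths_eq_sum_ssyt[OF shape] ..
  also have "\<dots> = (\<Sum>T\<in>g_tabs m (skew_cells la mu) (rcont r la) a b. tab_wt (skew_cells la mu) x \<alpha> \<beta> T)"
    unfolding skew_cells_eq_cells[OF P Q S n, folded M_def L_def]
      sum_g_tabs_eq_sum_super_tabs[OF T.finite_cells] sum_super_tabs_eq_sum_ssyt[OF T.finite_cells]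
    by (simp add: y_def z_def rc)
  finally show ?thesis .
qed

lemma permutes_fixed_if_ge:
  fixes \<sigma> :: "nat \<Rightarrow> nat"
  assumes perm: "\<sigma> permutes {0..<n}" and above: "\<And>i. p \<le> i \<Longrightarrow> i < n \<Longrightarrow> i \<le> \<sigma> i"
  shows "\<And>i. p \<le> i \<Longrightarrow> i < n \<Longrightarrow> \<sigma> i = i"
proof -
  define U where "U = {p..<n}"
  have into: "\<sigma> ` U \<subseteq> U"
  proof
    fix y assume "y \<in> \<sigma> ` U"
    then obtain i where i: "i \<in> U" "y = \<sigma> i" by auto
    then have "p \<le> i" "i < n" by (auto simp: U_def)
    moreover have "\<sigma> i \<in> {0..<n}" using permutes_in_image[OF perm, of i] \<open>i < n\<close> by simp
    ultimately show "y \<in> U" using above[of i] i by (auto simp: U_def)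
  qed
  have inj: "inj_on \<sigma> U" using permutes_inj[OF perm] by (rule inj_on_subset) simp
  have img: "\<sigma> ` U = U" by (rule card_subset_eq) (use into inj in \<open>auto simp: card_image U_def\<close>)
  have sums: "(\<Sum>i\<in>U. \<sigma> i) = (\<Sum>i\<in>U. i)"
    using sum.reindex[OF inj, of "\<lambda>i. i"] img by simp
  fix i assume i: "p \<le> i" "i < n"
  show "\<sigma> i = i"
  proof (rule ccontr)
    assume "\<sigma> i \<noteq> i"
    then have "i < \<sigma> i" using above[OF i] by simp
    then have "(\<Sum>i\<in>U. i) < (\<Sum>i\<in>U. \<sigma> i)"
      using i above by (intro sum_strict_mono_ex1) (auto simp: U_def)
    then show False using sums by simp
  qed
qed

lemma det_eq_if_unitriangular_tail:
  fixes A B :: "'a::comm_ring_1 mat"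
  assumes A: "A \<in> carrier_mat n n" and B: "B \<in> carrier_mat n n"
    and rows: "\<And>i j. i < p \<Longrightarrow> j < n \<Longrightarrow> A $$ (i, j) = B $$ (i, j)"
    and low: "\<And>i j. p \<le> i \<Longrightarrow> i < n \<Longrightarrow> j < i \<Longrightarrow> A $$ (i, j) = 0 \<and> B $$ (i, j) = 0"
    and diag: "\<And>i. p \<le> i \<Longrightarrow> i < n \<Longrightarrow> A $$ (i, i) = 1 \<and> B $$ (i, i) = 1"
  shows "det A = det B"
proof -
  have "(\<Prod>i=0..<n. A $$ (i, \<sigma> i)) = (\<Prod>i=0..<n. B $$ (i, \<sigma> i))" if perm: "\<sigma> permutes {0..<n}" for \<sigma>
  proof (cases "\<forall>i. p \<le> i \<and> i < n \<longrightarrow> i \<le> \<sigma> i")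
    case True
    then have hfix: "\<And>i. p \<le> i \<Longrightarrow> i < n \<Longrightarrow> \<sigma> i = i" using permutes_fixed_if_ge[OF perm] by blast
    show ?thesis
    proof (intro prod.cong refl)
      fix i assume i: "i \<in> {0..<n}"
      show "A $$ (i, \<sigma> i) = B $$ (i, \<sigma> i)"
      proof (cases "i < p")
        case True
        have "\<sigma> i < n" using perm i by (auto dest: permutes_in_image)
        then show ?thesis using rows True by simp
      next
        case False then show ?thesis using hfix diag i by simp
      qed
    qed
  next
    case False
    then obtain i where i: "p \<le> i" "i < n" "\<sigma> i < i" by (auto simp: not_le)
    have "A $$ (i, \<sigma> i) = 0" "B $$ (i, \<sigma> i) = 0" using low i by auto
    then have "(\<Prod>i=0..<n. A $$ (i, \<sigma> i)) = 0" "(\<Prod>i=0..<n. B $$ (i, \<sigma> i)) = 0"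
      using i by (auto intro!: prod_zero)
    then show ?thesis by simp
  qed
  then show ?thesis unfolding det_def'[OF A] det_def'[OF B] by simp
qed

lemma alph_split:
  assumes "p \<le> r + 1" "r \<le> q"
  shows "alph g p q = alph g p r @ alph g (r + 1) q"
proof (cases "p \<le> r")
  case True then show ?thesis unfolding alph_def using upto_split2[OF True assms(2)] by simp
next
  case False then have "r = p - 1" using assms by simp
  then show ?thesis unfolding alph_def by simp
qed

lemma mset_alph:
  assumes inj: "inj_on f {p..q}" and img: "f ` {p..q} = A" and gh: "\<And>k. p \<le> k \<Longrightarrow> k \<le> q \<Longrightarrow> g k = h (f k)"
  shows "mset (alph g p q) = image_mset h (mset_set A)"
proof -
  have "mset (alph g p q) = image_mset g (mset_set {p..q})"
    unfolding alph_def by (simp add: mset_set_set[symmetric])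
  also have "\<dots> = image_mset (h \<circ> f) (mset_set {p..q})"
    by (intro image_mset_cong) (simp add: gh)
  also have "\<dots> = image_mset h (image_mset f (mset_set {p..q}))" by (simp add: multiset.map_comp)
  also have "\<dots> = image_mset h (mset_set A)" using image_mset_mset_set[OF inj] img by simp
  finally show ?thesis .
qed

lemma image_nat_minus_shift: "(\<lambda>k. nat (k - s)) ` {s + 1..s + int t} = {1..<t + 1}"
proof (intro equalityI subsetI)
  fix y assume "y \<in> (\<lambda>k. nat (k - s)) ` {s + 1..s + int t}" then show "y \<in> {1..<t + 1}" by auto
next
  fix y assume y: "y \<in> {1..<t + 1}"
  then have "s + int y \<in> {s + 1..s + int t}" "y = nat ((s + int y) - s)" by auto
  then show "y \<in> (\<lambda>k. nat (k - s)) ` {s + 1..s + int t}" by blast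
qed

lemma inj_on_nat_minus_shift: "inj_on (\<lambda>k. nat (k - s)) {s + 1..s + int t}"
  by (rule inj_onI) auto

lemma image_nat_one_minus: "(\<lambda>k. nat (1 - k)) ` {1 - int t..0} = {1..<t + 1}"
proof (intro equalityI subsetI)
  fix y assume "y \<in> (\<lambda>k. nat (1 - k)) ` {1 - int t..0}" then show "y \<in> {1..<t + 1}" by auto
next
  fix y assume y: "y \<in> {1..<t + 1}"
  then have "1 - int y \<in> {1 - int t..0}" "y = nat (1 - (1 - int y))" by auto
  then show "y \<in> (\<lambda>k. nat (1 - k)) ` {1 - int t..0}" by blast
qed

lemma inj_on_nat_one_minus: "inj_on (\<lambda>k. nat (1 - k)) {1 - int t..0}"
  by (rule inj_onI) auto

lemma mset_alph_gy:
  fixes x \<alpha> \<beta> :: "nat \<Rightarrow> 'a::comm_ring_1"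
  assumes j: "1 \<le> j" and L: "1 \<le> L"
  shows "mset (alph (gy m x \<alpha> \<beta>) (2 - int j) (int L + int m - 1))
       = mset (map x [1..<m + 1] @ map (\<lambda>k. - \<alpha> k) [1..<j] @ map \<beta> [1..<L])"
proof -
  let ?y = "gy m x \<alpha> \<beta>"
  have "alph ?y (2 - int j) (int L + int m - 1) = alph ?y (2 - int j) 0 @ alph ?y 1 (int L + int m - 1)"
    using alph_split[of "2 - int j" 0 "int L + int m - 1"] j L by simp
  also have "alph ?y 1 (int L + int m - 1)
    = alph ?y 1 (int m) @ alph ?y (int m + 1) (int L + int m - 1)"
    using alph_split[of 1 "int m" "int L + int m - 1"] L by simp
  finally have split: "alph ?y (2 - int j) (int L + int m - 1)
      = alph ?y (1 - int (j - 1)) 0 @ alph ?y (0 + 1) (0 + int m) @ alph ?y (int m + 1) (int m + int (L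
        - 1))"
    using j L by (simp add: of_nat_diff algebra_simps)
  have "mset (alph ?y (1 - int (j - 1)) 0) = image_mset (\<lambda>k. - \<alpha> k) (mset_set {1..<j})"
    using mset_alph[OF inj_on_nat_one_minus[of "j - 1"] image_nat_one_minus[of "j - 1"],
        where g = ?y and h = "\<lambda>k. - \<alpha> k"] j
    by (simp add: gy_def)
  moreover have "mset (alph ?y (0 + 1) (0 + int m)) = image_mset x (mset_set {1..<m + 1})"
    by (rule mset_alph[OF inj_on_nat_minus_shift image_nat_minus_shift]) (simp add: gy_def)
  moreover have "mset (alph ?y (int m + 1) (int m + int (L - 1))) = image_mset \<beta> (mset_set {1..<L})"
    using mset_alph[OF inj_on_nat_minus_shift[of "int m" "L - 1"] image_nat_minus_shift[of "int m" "L
      - 1"],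
        where g = ?y and h = \<beta>] L
    by (simp add: gy_def)
  ultimately show ?thesis
    unfolding split mset_append mset_map mset_upt by (simp add: add_ac)
qed

lemma mset_alph_gz:
  fixes \<alpha> \<beta> :: "nat \<Rightarrow> 'a::comm_ring_1"
  assumes i: "1 \<le> i"
  shows "mset (alph (gz m \<alpha> \<beta>) (1 - int M) (int m + int i - 1))
       = mset ((map (\<lambda>k. - \<alpha> k) [1..<i] @ map \<beta> [1..<M + 1]) @ replicate m 0)"
proof -
  let ?z = "gz m \<alpha> \<beta>"
  have "alph ?z (1 - int M) (int m + int i - 1) = alph ?z (1 - int M) 0 @ alph ?z 1 (int m + int i - 1)"
    using alph_split[of "1 - int M" 0 "int m + int i - 1"] i by simp
  also have "alph ?z 1 (int m + int i - 1)
    = alph ?z 1 (int m) @ alph ?z (int m + 1) (int m + int i - 1)"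
    using alph_split[of 1 "int m" "int m + int i - 1"] i by simp
  finally have split: "alph ?z (1 - int M) (int m + int i - 1)
      = alph ?z (1 - int M) 0 @ alph ?z 1 (int m) @ alph ?z (int m + 1) (int m + int (i - 1))"
    using i by (simp add: of_nat_diff algebra_simps)
  have "mset (alph ?z (1 - int M) 0) = image_mset \<beta> (mset_set {1..<M + 1})"
    by (rule mset_alph[OF inj_on_nat_one_minus image_nat_one_minus]) (simp add: gz_def)
  moreover have "alph ?z 1 (int m) = replicate m 0"
  proof -
    have "alph ?z 1 (int m) = map (\<lambda>_. 0) [1..int m]"
      unfolding alph_def by (intro map_cong refl) (simp add: gz_def)
    then show ?thesis by (simp add: map_replicate_const)
  qed
  moreover have "mset (alph ?z (int m + 1) (int m + int (i - 1)))
    = image_mset (\<lambda>k. - \<alpha> k) (mset_set {1..<i})"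
    using mset_alph[OF inj_on_nat_minus_shift[of "int m" "i - 1"] image_nat_minus_shift[of "int m" "i
      - 1"],
        where g = ?z and h = "\<lambda>k. - \<alpha> k"] i
    by (simp add: gz_def)
  ultimately show ?thesis
    unfolding split mset_append mset_map mset_upt by (simp add: add_ac)
qed

text \<open>The flagged entry with \<open>a_j = 2 - j\<close>, \<open>b_i = L + m - 1\<close> uses the same alphabets as the entry
  of the usual determinant, up to order and the \<open>m\<close> zeros that \<open>z\<close> takes on \<open>[m]\<close>.\<close>
lemma esup_g_alph_eq_usual:
  fixes x \<alpha> \<beta> :: "nat \<Rightarrow> 'a::comm_ring_1"
  assumes "1 \<le> i" "1 \<le> j" "1 \<le> L"
  shows "esup k (alph (gy m x \<alpha> \<beta>) (2 - int j) (int L + int m - 1))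
             (alph (gz m \<alpha> \<beta>) (1 - int M) (int m + int i - 1))
       = esup k (map x [1..<m + 1] @ map (\<lambda>k. - \<alpha> k) [1..<j] @ map \<beta> [1..<L])
             (map (\<lambda>k. - \<alpha> k) [1..<i] @ map \<beta> [1..<M + 1])"
  unfolding esup_cong_mset[OF mset_alph_gy[OF assms(2,3)] mset_alph_gz[OF assms(1)]]
  by (rule esup_append_zeros)

text \<open>Both determinants are unitriangular in the rows \<open>i \<ge> \<lambda>_1\<close> (0-based), where \<open>\<lambda>'_(i+1) = 0\<close>;
  the other rows agree entrywise.\<close>
lemma gusual_eq_gflag:
  fixes x \<alpha> \<beta> :: "nat \<Rightarrow> 'a::comm_ring_1"
  assumes P: "is_partition la" and Q: "is_partition mu" and S: "subpart mu la"
    and n: "part la 1 \<le> n"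
  shows "gusual la mu n m x \<alpha> \<beta> = gflag (rcont (1 - int (conj la 1)) la) la mu n
           (\<lambda>i. 2 - int i) (\<lambda>i. int (conj la i) + int m - 1) m x \<alpha> \<beta>"
proof -
  define fA where "fA = (\<lambda>(i0, j0). let i = i0 + 1; j = j0 + 1
       in esup (int (conj la i) - int i - int (conj mu j) + int j)
            (map x [1..<m + 1] @ map (\<lambda>k. - \<alpha> k) [1..<j] @ map \<beta> [1..<conj la i])
            (map (\<lambda>k. - \<alpha> k) [1..<i] @ map \<beta> [1..<conj mu j + 1]))"
  define fB where "fB = (\<lambda>(i0, j0).
       let i = i0 + 1; j = j0 + 1;
           a' = 2 - int j + rcont (1 - int (conj la 1)) la (conj mu j + 1) j;
           b' = int (conj la i) + int m - 1 + rcont (1 - int (conj la 1)) la (conj la i) i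
       in esup (int (conj la i) - int i - int (conj mu j) + int j)
               (alph (gy m x \<alpha> \<beta>) (2 - int j) (int (conj la i) + int m - 1)) (alph (gz m \<alpha> \<beta>) a' b'))"
  have rows: "1 \<le> conj la (Suc i) \<longleftrightarrow> i < part la 1" for i
    using le_part_iff_le_conj[OF P, of 1 "Suc i"] by auto
  have "det (mat n n fA) = det (mat n n fB)"
  proof (rule det_eq_if_unitriangular_tail[where p = "part la 1"])
    fix i j assume i: "i < part la 1" and j: "j < n"
    have "fB (i, j) = esup (int (conj la (Suc i)) - int (Suc i) - int (conj mu (Suc j)) + int (Suc j))
        (alph (gy m x \<alpha> \<beta>) (2 - int (Suc j)) (int (conj la (Suc i)) + int m - 1))
        (alph (gz m \<alpha> \<beta>) (1 - int (conj mu (Suc j))) (int m + int (Suc i) - 1))"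
      unfolding fB_def Let_def by (simp add: rcont_def algebra_simps)
    also have "\<dots> = fA (i, j)"
      unfolding fA_def Let_def by (subst esup_g_alph_eq_usual) (use rows i in auto)
    finally show "mat n n fA $$ (i, j) = mat n n fB $$ (i, j)" using i j n by simp
  next
    fix i j assume i: "part la 1 \<le> i" "i < n" and ji: "j < i"
    have "conj la (Suc i) = 0" using rows[of i] i by simp
    then have "int (conj la (Suc i)) - int (Suc i) - int (conj mu (Suc j)) + int (Suc j) < 0"
      using ji by simp
    then have "fA (i, j) = 0" "fB (i, j) = 0" unfolding fA_def fB_def Let_def
      by (simp_all add: esup_def)
    then show "mat n n fA $$ (i, j) = 0 \<and> mat n n fB $$ (i, j) = 0" using i ji by simp
  next
    fix i assume i: "part la 1 \<le> i" "i < n"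
    have L0: "conj la (Suc i) = 0" using rows[of i] i by simp
    then have M0: "conj mu (Suc i) = 0" using conj_mono_subpart[OF P Q S, of "Suc i"] by simp
    have "fA (i, i) = 1" "fB (i, i) = 1"
      unfolding fA_def fB_def Let_def using L0 M0 by (simp_all add: esup_def)
    then show "mat n n fA $$ (i, i) = 1 \<and> mat n n fB $$ (i, i) = 1" using i by simp
  qed auto
  then show ?thesis
    unfolding gusual_def gflag_def Sdet_def fA_def fB_def .
qed

theorem g_usual_tableau_formula:
  fixes x \<alpha> \<beta> :: "nat \<Rightarrow> 'a::comm_ring_1"
  assumes P: "is_partition la" and Q: "is_partition mu" and S: "subpart mu la"
    and n: "part la 1 \<le> n"
  shows "gusual la mu n m x \<alpha> \<beta> = (\<Sum>T\<in>GT_usual m la mu. tab_wt (skew_cells la mu) x \<alpha> \<beta> T)"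
proof -
  have content: "ucont = rcont (1 - int (conj la 1)) la" by (auto simp: fun_eq_iff ucont_def rcont_def)
  have "column_flags la mu n (\<lambda>i. 2 - int i) (\<lambda>i. int (conj la i) + int m - 1)"
    unfolding column_flags_def using conj_antimono[of _ "Suc _" mu] by force
  then show ?thesis
    unfolding gusual_eq_gflag[OF P Q S n] GT_usual_def content
      by (rule g_flagged_tableau_formula[OF P Q S n])
qed

theorem proposition8p2:
  fixes m n :: nat and la mu :: "nat list" and r :: int
    and x \<alpha> \<beta> :: "nat \<Rightarrow> 'a::comm_ring_1"
  assumes "is_partition la" and "is_partition mu" and "subpart mu la"
    and "part la 1 \<le> n"
  shows "(\<forall>a b. column_flags la mu n a b \<longrightarrow>
            gflag (rcont r la) la mu n a b m x \<alpha> \<beta> =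
            (\<Sum>T\<in>g_tabs m (skew_cells la mu) (rcont r la) a b. tab_wt (skew_cells la mu) x \<alpha> \<beta> T))
       \<and> gusual la mu n m x \<alpha> \<beta> =
            (\<Sum>T\<in>GT_usual m la mu. tab_wt (skew_cells la mu) x \<alpha> \<beta> T)"
  using g_flagged_tableau_formula[OF assms] g_usual_tableau_formula[OF assms] by blast

end
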